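(* Let $\tau$ be a stopping time with values in $[0,T]$ and $\xi$ an $\mathcal{F}_\tau$-measurable random variable with values in $\mathcal{V}$. Then for every $n\ge0$ and $t\in[\tau,T]$, $$0\le Y^0_t(\xi)\le Y^n_t(\xi)\le\mathbb{E}\big[e^{\int_\tau^T\gamma_sds}\,\big|\,\mathcal{F}_t\big],\quad\mathbb{P}\text{-a.s.}$$ Moreover, if $\tau\ge T-\Delta$, then $Y^n_t(\xi)=O^n_t(\xi)$ for all $t\in[\tau,T]$ and all $n\ge1$.
   Context: Let $T>0$, $(\Omega,\mathcal{F},\mathbb{P})$ a complete probability space carrying a standard $d$-dimensional Brownian motion $B=(B_t)_{t\le T}$, and $(\mathcal{F}_t)_{t\le T}$ the completion by $\mathbb{P}$-null sets of the natural filtration of $B$; $\mathcal{P}$ is the progressive $\sigma$-algebra on $[0,T]\times\Omega$ and $\mathcal{T}_t$ the set of stopping times $\nu$ with $t\le\nu\le T$ a.s. Fix $\ell\ge1$, a $\mathcal{P}$-measurable $\mathbb{R}^\ell$-valued process $X$ with $\mathbb{E}\int_0^T|X_s|^2ds<\infty$, $\Delta\in(0,T)$, a finite set $U=\{a_1,\dots,a_p\}\subset\mathbb{R}^\ell$, and $\psi:\mathbb{R}^\ell\to[0,\infty)$. The map $g:[0,T]\times\Omega\times\mathbb{R}^\ell\to\mathbb{R}$ is $\mathcal{P}\otimes\mathcal{B}(\mathbb{R}^\ell)$-measurable and there is a non-negative $\mathcal{P}$-measurable $\gamma$ with $\mathbb{E}[e^{\int_0^T\gamma_sds}]<\infty$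 and, a.s., $|g(t,\omega,x)|\le\gamma_t(\omega)$ for all $(t,x)$. Scheme: $Y^0_t(a)=\mathbb{E}[\exp\{\int_t^Tg(s,X_s+a)ds\}\mid\mathcal{F}_t]$; for $n\ge1$, $O^n_t(a)=\mathbf{1}_{[t<T-\Delta]}\mathbb{E}[\max_{\beta\in U}\{\exp(\int_t^{t+\Delta}g(s,X_s+a)ds-\psi(\beta))Y^{n-1}_{t+\Delta}(a+\beta)\}\mid\mathcal{F}_t]+\mathbf{1}_{[T-\Delta\le t\le T]}\mathbb{E}[\exp\{\int_t^Tg(s,X_s+a)ds\}\mid\mathcal{F}_t]$ and $Y^n_t(a)=\operatorname{ess\,sup}_{\tau\in\mathcal{T}_t}\mathbb{E}[\exp\{\int_t^\tau g(s,X_s+a)ds\}O^n_\tau(a)\mid\mathcal{F}_t]$. Let $\mathfrak{X}=[T/\Delta]$, $\mathcal{U}_k=\{a_1'+\dots+a_k':(a_1',\dots,a_k')\in U^k\}$ and $\mathcal{V}=\bigcup_{k=1}^{\mathfrak{X}}\mathcal{U}_k$ (a finite set). For a $\mathcal{V}$-valued random variable $\xi$ set $Y^n_t(\xi)=\sum_{a\in\mathcal{V}}Y^n_t(a)\mathbf{1}_{[\xi=a]}$ and $O^n_t(\xi)=\sum_{a\in\mathcal{V}}O^n_t(a)\mathbf{1}_{[\xi=a]}$. *)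

theory Defs
  imports "HOL-Probability.Probability"
begin

definition brownian_filtration ::
  "'a measure \<Rightarrow> (real \<Rightarrow> 'a \<Rightarrow> real^'d) \<Rightarrow> real \<Rightarrow> real \<Rightarrow> 'a measure" where
  "brownian_filtration M B T t =
     sigma (space M)
       ({B r -` A \<inter> space M | r A. r \<in> {0..min t T} \<and> A \<in> sets borel} \<union> null_sets M)"

definition std_brownian_motion ::
  "'a measure \<Rightarrow> real \<Rightarrow> (real \<Rightarrow> 'a \<Rightarrow> real^'d) \<Rightarrow> bool" where
  "std_brownian_motion M T B \<longleftrightarrow>
     (\<forall>t\<in>{0..T}. B t \<in> borel_measurable M) \<and>
     (\<forall>\<omega>\<in>space M. B 0 \<omega> = 0 \<and> continuous_on {0..T} (\<lambda>t. B t \<omega>)) \<and>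
     (\<forall>s t. 0 \<le> s \<and> s < t \<and> t \<le> T \<longrightarrow>
        prob_space.indep_vars M (\<lambda>_. borel) (\<lambda>i \<omega>. (B t \<omega> - B s \<omega>) $ i) UNIV \<and>
        (\<forall>i. distributed M lborel (\<lambda>\<omega>. (B t \<omega> - B s \<omega>) $ i) (normal_density 0 (sqrt (t - s)))) \<and>
        prob_space.indep_set M
          (sigma_sets (space M) {B r -` A \<inter> space M | r A. r \<in> {0..s} \<and> A \<in> sets borel})
          {(\<lambda>\<omega>. B t \<omega> - B s \<omega>) -` A \<inter> space M | A. A \<in> sets (borel :: (real^'d) measure)})"

definition progressive ::
  "(real \<Rightarrow> 'a measure) \<Rightarrow> real \<Rightarrow> (real \<Rightarrow> 'a \<Rightarrow> 'b::topological_space) \<Rightarrow> bool" where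
  "progressive F T X \<longleftrightarrow>
     (\<forall>t\<in>{0..T}. (\<lambda>(s, \<omega>). X s \<omega>) \<in> borel_measurable (restrict_space borel {0..t} \<Otimes>\<^sub>M F t))"

definition progressive_param ::
  "(real \<Rightarrow> 'a measure) \<Rightarrow> real \<Rightarrow> (real \<Rightarrow> 'a \<Rightarrow> 'c::topological_space \<Rightarrow> real) \<Rightarrow> bool" where
  "progressive_param F T g \<longleftrightarrow>
     (\<forall>t\<in>{0..T}. (\<lambda>((s, \<omega>), x). g s \<omega> x)
        \<in> borel_measurable ((restrict_space borel {0..t} \<Otimes>\<^sub>M F t) \<Otimes>\<^sub>M borel))"

definition ess_sup_family :: "'a measure \<Rightarrow> ('a \<Rightarrow> real) set \<Rightarrow> ('a \<Rightarrow> real)" where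
  "ess_sup_family M Zs =
     (SOME Y. Y \<in> borel_measurable M \<and> (\<forall>Z\<in>Zs. AE \<omega> in M. Z \<omega> \<le> Y \<omega>) \<and>
        (\<forall>Y'\<in>borel_measurable M. (\<forall>Z\<in>Zs. AE \<omega> in M. Z \<omega> \<le> Y' \<omega>) \<longrightarrow> (AE \<omega> in M. Y \<omega> \<le> Y' \<omega>)))"

definition stopping_times_from ::
  "'a measure \<Rightarrow> (real \<Rightarrow> 'a measure) \<Rightarrow> real \<Rightarrow> ('a \<Rightarrow> real) \<Rightarrow> ('a \<Rightarrow> real) set" where
  "stopping_times_from M F T \<sigma> =
     {\<nu>. stopping_time F \<nu> \<and> (AE \<omega> in M. \<sigma> \<omega> \<le> \<nu> \<omega> \<and> \<nu> \<omega> \<le> T)}"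

definition cexp_st ::
  "'a measure \<Rightarrow> (real \<Rightarrow> 'a measure) \<Rightarrow> ('a \<Rightarrow> real) \<Rightarrow> ('a \<Rightarrow> real) \<Rightarrow> ('a \<Rightarrow> real)" where
  "cexp_st M F \<sigma> f = real_cond_exp M (filtration.pre_sigma (space M) F \<sigma>) f"

definition Igr ::
  "(real \<Rightarrow> 'a \<Rightarrow> real^'l \<Rightarrow> real) \<Rightarrow> (real \<Rightarrow> 'a \<Rightarrow> real^'l) \<Rightarrow> real^'l
     \<Rightarrow> ('a \<Rightarrow> real) \<Rightarrow> ('a \<Rightarrow> real) \<Rightarrow> 'a \<Rightarrow> real" where
  "Igr g X a \<sigma> \<nu> \<omega> = (LINT s:{\<sigma> \<omega>..\<nu> \<omega>}|lborel. g s \<omega> (X s \<omega> + a))"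

definition O_step ::
  "'a measure \<Rightarrow> (real \<Rightarrow> 'a measure) \<Rightarrow> real \<Rightarrow> (real \<Rightarrow> 'a \<Rightarrow> real^'l) \<Rightarrow> real
   \<Rightarrow> (real^'l) set \<Rightarrow> (real^'l \<Rightarrow> real) \<Rightarrow> (real \<Rightarrow> 'a \<Rightarrow> real^'l \<Rightarrow> real)
   \<Rightarrow> (('a \<Rightarrow> real) \<Rightarrow> real^'l \<Rightarrow> 'a \<Rightarrow> real)
   \<Rightarrow> ('a \<Rightarrow> real) \<Rightarrow> real^'l \<Rightarrow> 'a \<Rightarrow> real" where
  "O_step M F T X \<Delta> U \<psi> g Yprev \<sigma> a =
     (\<lambda>\<omega>. cexp_st M F \<sigma>
            (\<lambda>\<omega>'. indicator {\<omega>''. \<sigma> \<omega>'' < T - \<Delta>} \<omega>' *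
               Max ((\<lambda>\<beta>. exp (Igr g X a \<sigma> (\<lambda>\<omega>''. \<sigma> \<omega>'' + \<Delta>) \<omega>' - \<psi> \<beta>)
                          * Yprev (\<lambda>\<omega>''. min (\<sigma> \<omega>'' + \<Delta>) T) (a + \<beta>) \<omega>') ` U)) \<omega>
        + indicator {\<omega>''. T - \<Delta> \<le> \<sigma> \<omega>'' \<and> \<sigma> \<omega>'' \<le> T} \<omega> *
            cexp_st M F \<sigma> (\<lambda>\<omega>'. exp (Igr g X a \<sigma> (\<lambda>_. T) \<omega>')) \<omega>)"

primrec Ysch ::
  "'a measure \<Rightarrow> (real \<Rightarrow> 'a measure) \<Rightarrow> real \<Rightarrow> (real \<Rightarrow> 'a \<Rightarrow> real^'l) \<Rightarrow> real
   \<Rightarrow> (real^'l) set \<Rightarrow> (real^'l \<Rightarrow> real) \<Rightarrow> (real \<Rightarrow> 'a \<Rightarrow> real^'l \<Rightarrow> real)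
   \<Rightarrow> nat \<Rightarrow> ('a \<Rightarrow> real) \<Rightarrow> real^'l \<Rightarrow> 'a \<Rightarrow> real" where
  "Ysch M F T X \<Delta> U \<psi> g 0 \<sigma> a = cexp_st M F \<sigma> (\<lambda>\<omega>. exp (Igr g X a \<sigma> (\<lambda>_. T) \<omega>))"
| "Ysch M F T X \<Delta> U \<psi> g (Suc m) \<sigma> a =
     ess_sup_family M
       {cexp_st M F \<sigma> (\<lambda>\<omega>. exp (Igr g X a \<sigma> \<nu> \<omega>) *
            O_step M F T X \<Delta> U \<psi> g (Ysch M F T X \<Delta> U \<psi> g m) \<nu> a \<omega>)
        | \<nu>. \<nu> \<in> stopping_times_from M F T \<sigma>}"

text \<open>O^n for n >= 1.\<close>
definition Osch ::
  "'a measure \<Rightarrow> (real \<Rightarrow> 'a measure) \<Rightarrow> real \<Rightarrow> (real \<Rightarrow> 'a \<Rightarrow> real^'l) \<Rightarrow> real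
   \<Rightarrow> (real^'l) set \<Rightarrow> (real^'l \<Rightarrow> real) \<Rightarrow> (real \<Rightarrow> 'a \<Rightarrow> real^'l \<Rightarrow> real)
   \<Rightarrow> nat \<Rightarrow> ('a \<Rightarrow> real) \<Rightarrow> real^'l \<Rightarrow> 'a \<Rightarrow> real" where
  "Osch M F T X \<Delta> U \<psi> g n = O_step M F T X \<Delta> U \<psi> g (Ysch M F T X \<Delta> U \<psi> g (n - 1))"

definition Usums :: "(real^'l) set \<Rightarrow> nat \<Rightarrow> (real^'l) set" where
  "Usums U k = {sum_list as | as. length as = k \<and> set as \<subseteq> U}"

definition Vset :: "(real^'l) set \<Rightarrow> real \<Rightarrow> real \<Rightarrow> (real^'l) set" where
  "Vset U T \<Delta> = (\<Union>k\<in>{1..nat \<lfloor>T / \<Delta>\<rfloor>}. Usums U k)"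

text \<open>Evaluation at a V-valued random variable xi: sum over a in V of Z(a) 1_{xi = a}.\<close>
definition at_rv :: "(real^'l) set \<Rightarrow> (real^'l \<Rightarrow> 'a \<Rightarrow> real) \<Rightarrow> ('a \<Rightarrow> real^'l) \<Rightarrow> 'a \<Rightarrow> real" where
  "at_rv V Z \<xi> \<omega> = (\<Sum>a\<in>V. Z a \<omega> * indicator {\<omega>'. \<xi> \<omega>' = a} \<omega>)"

end

theory Submission
  imports Defs
begin

(* All quantities of the scheme are considered at an arbitrary stopping time rho instead of a
   deterministic time t. Write Gamma(rho, nu) for the integral of gamma over [rho, nu] and call
   E[exp Gamma(rho, T) | F_rho] the envelope at rho. Since |g| <= gamma and psi >= 0, induction
   on n shows that the obstacle O^n at a stopping time nu is at most the envelope at nu, so every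
   payoff E[exp (int_rho^nu g(s, X_s + a) ds) O^n_nu | F_rho] is at most
   E[exp Gamma(rho, nu) envelope(nu) | F_rho], which is the envelope at rho by the tower property
   and the additivity of Gamma. Families of random variables bounded by a measurable function have
   essential suprema (a countable subfamily maximising the expectation of the supremum of their
   arctangents suffices), so Y^n is at most the envelope, and stopping at T gives Y^0 <= Y^n.
   After T - Delta no switch is possible: the obstacle reduces to Y^0 and so does every payoff,
   whence Y^n = O^n. Since xi takes finitely many values, all of this holds at xi almost surely,
   and on {tau <= t} the envelope at t is at most E[exp Gamma(tau, T) | F_t]. *)

section \<open>Essential suprema of families of random variables\<close>

lemma countable_union_maximizer:
  fixes J :: "'b set \<Rightarrow> real"
  assumes "A \<in> cs" and union: "\<And>C. (\<And>n::nat. C n \<in> cs) \<Longrightarrow> (\<Union>n. C n) \<in> cs"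
    and mono: "\<And>C D. C \<in> cs \<Longrightarrow> D \<in> cs \<Longrightarrow> C \<subseteq> D \<Longrightarrow> J C \<le> J D"
    and bdd: "bdd_above (J ` cs)"
  obtains C where "C \<in> cs" "\<And>D. D \<in> cs \<Longrightarrow> J D \<le> J C"
proof -
  define s where "s = Sup (J ` cs)"
  have "\<exists>C\<in>cs. s - 1 / Suc n < J C" for n :: nat
    using \<open>A \<in> cs\<close> bdd less_cSup_iff[of "J ` cs" "s - 1 / Suc n"] unfolding s_def by auto
  then obtain Cn where Cn: "\<And>n. Cn n \<in> cs" "\<And>n. s - 1 / Suc n < J (Cn n)" by metis
  have C: "(\<Union>n. Cn n) \<in> cs" by (rule union[OF Cn(1)])
  have "s \<le> J (\<Union>n. Cn n)"
  proof (rule field_le_epsilon)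
    fix e :: real assume "0 < e"
    then obtain n :: nat where n: "1 / Suc n < e" by (metis nat_approx_posE)
    have "s - 1 / Suc n < J (Cn n)" by (rule Cn(2))
    also have "\<dots> \<le> J (\<Union>n. Cn n)" using Cn(1) C by (intro mono) auto
    finally show "s \<le> J (\<Union>n. Cn n) + e" using n by simp
  qed
  show thesis
  proof (rule that[OF C])
    fix D assume "D \<in> cs"
    then have "J D \<le> s" unfolding s_def using bdd by (intro cSup_upper) auto
    with \<open>s \<le> J (\<Union>n. Cn n)\<close> show "J D \<le> J (\<Union>n. Cn n)" by linarith
  qed
qed

lemma (in finite_measure) integrable_SUP_bounded:
  fixes C :: "('a \<Rightarrow> real) set"
  assumes "countable C" "C \<noteq> {}" "C \<subseteq> borel_measurable M" and bounded: "\<forall>h\<in>C. \<forall>x. \<bar>h x\<bar> \<le> K"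
  shows "integrable M (\<lambda>x. SUP h\<in>C. h x)" and "\<bar>SUP h\<in>C. h x\<bar> \<le> K"
proof -
  have bdd: "bdd_above ((\<lambda>h. h x) ` C)" for x
    using bounded by (intro bdd_aboveI[of _ K]) (auto simp: abs_le_iff)
  obtain h where h: "h \<in> C" using assms(2) by blast
  show bound: "\<bar>SUP h\<in>C. h x\<bar> \<le> K" for x
  proof -
    have "h x \<le> (SUP h\<in>C. h x)" using h bdd by (intro cSUP_upper)
    moreover have "(SUP h\<in>C. h x) \<le> K" using assms(2) bounded by (intro cSUP_least) (auto simp: abs_le_iff)
    moreover have "\<bar>h x\<bar> \<le> K" using h bounded by blast
    ultimately show ?thesis by (auto simp: abs_le_iff)
  qed
  show "integrable M (\<lambda>x. SUP h\<in>C. h x)"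
  proof (rule integrable_const_bound[where B=K])
    show "AE x in M. norm (SUP h\<in>C. h x) \<le> K" using bound by simp
    show "(\<lambda>x. SUP h\<in>C. h x) \<in> borel_measurable M" using assms bdd by (intro borel_measurable_cSUP) auto
  qed
qed

lemma AE_eq_if_le_integral_le:
  fixes f g :: "'a \<Rightarrow> real"
  assumes "integrable M f" "integrable M g" "\<And>x. f x \<le> g x" "integral\<^sup>L M g \<le> integral\<^sup>L M f"
  shows "AE x in M. f x = g x"
proof -
  have "integral\<^sup>L M (\<lambda>x. g x - f x) = 0"
    using assms integral_mono[OF assms(1,2)] by (simp add: Bochner_Integration.integral_diff)
  then have "AE x in M. g x - f x = 0"
    using assms by (subst (asm) integral_nonneg_eq_0_iff_AE) auto
  then show ?thesis by eventually_elim simp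
qed

text \<open>The countable subfamily is found by maximising the integral of its pointwise supremum.\<close>
lemma (in finite_measure) countable_subfamily_dominates_AE:
  fixes Hs :: "('a \<Rightarrow> real) set"
  assumes meas: "Hs \<subseteq> borel_measurable M" and "Hs \<noteq> {}"
    and bounded: "\<forall>h\<in>Hs. \<forall>x. \<bar>h x\<bar> \<le> K"
  obtains C where "countable C" "C \<subseteq> Hs" "C \<noteq> {}"
    "\<And>h. h \<in> Hs \<Longrightarrow> AE x in M. h x \<le> (SUP h'\<in>C. h' x)"
proof -
  define S where "S C x = (SUP h\<in>C. h x)" for C :: "('a \<Rightarrow> real) set" and x
  define cs where "cs = {C. countable C \<and> C \<subseteq> Hs \<and> C \<noteq> {}}"
  define J where "J C = integral\<^sup>L M (S C)" for C
  have S_integrable: "integrable M (S C)" and S_bounded: "\<bar>S C x\<bar> \<le> K" if "C \<in> cs" for C x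
  proof -
    have "countable C" "C \<noteq> {}" "C \<subseteq> borel_measurable M" "\<forall>h\<in>C. \<forall>x. \<bar>h x\<bar> \<le> K"
      using that meas bounded by (auto simp: cs_def)
    note SUP = integrable_SUP_bounded[OF this]
    show "integrable M (S C)" "\<bar>S C x\<bar> \<le> K" unfolding S_def by (rule SUP(1), rule SUP(2))
  qed
  have bdd: "bdd_above ((\<lambda>h. h x) ` C)" if "C \<in> cs" for C x
    using bounded that by (intro bdd_aboveI[of _ K]) (auto simp: abs_le_iff cs_def)
  have S_upper: "h x \<le> S C x" if "h \<in> C" "C \<in> cs" for h C x
    unfolding S_def using that bdd by (intro cSUP_upper) auto
  have S_mono: "S C x \<le> S D x" if "C \<in> cs" "D \<in> cs" "C \<subseteq> D" for C D x
    using that bdd unfolding S_def cs_def by (intro cSUP_subset_mono) auto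
  have J_mono: "J C \<le> J D" if "C \<in> cs" "D \<in> cs" "C \<subseteq> D" for C D
    unfolding J_def using that by (intro integral_mono S_integrable S_mono)
  have union: "(\<Union>n. D n) \<in> cs" if "\<And>n::nat. D n \<in> cs" for D
    using that by (auto simp: cs_def)
  have "bdd_above (J ` cs)"
  proof (rule bdd_aboveI)
    fix r assume "r \<in> J ` cs"
    then obtain C where C: "C \<in> cs" "r = J C" by blast
    show "r \<le> (\<integral>x. K \<partial>M)"
      unfolding C J_def using S_bounded[OF C(1)]
      by (intro integral_mono S_integrable C(1)) (auto simp: abs_le_iff)
  qed
  moreover obtain h0 where "h0 \<in> Hs" using \<open>Hs \<noteq> {}\<close> by blast
  then have "{h0} \<in> cs" by (simp add: cs_def)
  ultimately obtain C where C: "C \<in> cs" and C_max: "\<And>D. D \<in> cs \<Longrightarrow> J D \<le> J C"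
    using countable_union_maximizer[of "{h0}" cs J, OF _ union J_mono] by blast
  show thesis
  proof (rule that)
    show "countable C" "C \<subseteq> Hs" "C \<noteq> {}" using C by (auto simp: cs_def)
  next
    fix h assume h: "h \<in> Hs"
    define C' where "C' = insert h C"
    have C': "C' \<in> cs" using C h by (auto simp: C'_def cs_def)
    have "J C' \<le> J C" by (rule C_max[OF C'])
    then have "AE x in M. S C x = S C' x"
      using S_mono[OF C C'] unfolding J_def
      by (intro AE_eq_if_le_integral_le S_integrable C C') (auto simp: C'_def)
    then show "AE x in M. h x \<le> (SUP h'\<in>C. h' x)"
    proof eventually_elim
      case (elim x)
      have "h x \<le> S C' x" using C' by (intro S_upper) (auto simp: C'_def)
      with elim show ?case by (simp add: S_def)
    qed
  qed
qed

lemma (in finite_measure) countable_subfamily_dominates_arctan_AE: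
  fixes Zs :: "('a \<Rightarrow> real) set"
  assumes meas: "Zs \<subseteq> borel_measurable M" and "Zs \<noteq> {}"
  obtains C where "countable C" "C \<subseteq> Zs" "C \<noteq> {}"
    "\<And>Z. Z \<in> Zs \<Longrightarrow> AE x in M. arctan (Z x) \<le> (SUP Z'\<in>C. arctan (Z' x))"
proof -
  let ?A = "\<lambda>Z x. arctan (Z x)"
  have A_meas: "?A ` Zs \<subseteq> borel_measurable M" using meas by auto
  have A_bounded: "\<forall>h\<in>?A ` Zs. \<forall>x. \<bar>h x\<bar> \<le> pi / 2"
    unfolding abs_le_iff using arctan_bounded by (smt (verit) imageE)
  have A_ne: "?A ` Zs \<noteq> {}" using \<open>Zs \<noteq> {}\<close> by simp
  from countable_subfamily_dominates_AE[OF A_meas A_ne A_bounded]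
  obtain C' where "countable C'" "C' \<subseteq> ?A ` Zs" "C' \<noteq> {}"
    and C'_dom: "\<And>h. h \<in> ?A ` Zs \<Longrightarrow> AE x in M. h x \<le> (SUP h'\<in>C'. h' x)"
    by blast
  moreover obtain C where "countable C" "C \<subseteq> Zs" "C' = ?A ` C"
    using countable_subset_image[of C' ?A Zs] \<open>countable C'\<close> \<open>C' \<subseteq> ?A ` Zs\<close> by blast
  ultimately show thesis by (intro that[of C]) (auto simp: image_image)
qed

lemma (in finite_measure) ess_sup_family_exists:
  fixes Zs :: "('a \<Rightarrow> real) set"
  assumes meas: "Zs \<subseteq> borel_measurable M" and "Zs \<noteq> {}"
    and W[measurable]: "W \<in> borel_measurable M" and W_upper: "\<And>Z. Z \<in> Zs \<Longrightarrow> AE x in M. Z x \<le> W x"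
  shows "\<exists>Y. Y \<in> borel_measurable M \<and> (\<forall>Z\<in>Zs. AE x in M. Z x \<le> Y x) \<and>
    (\<forall>Y'\<in>borel_measurable M. (\<forall>Z\<in>Zs. AE x in M. Z x \<le> Y' x) \<longrightarrow> (AE x in M. Y x \<le> Y' x))"
proof -
  \<comment> \<open>arctan makes the family bounded; tan transports the supremum back.\<close>
  obtain C where C: "countable C" "C \<subseteq> Zs" "C \<noteq> {}"
    and S_dom: "\<And>Z. Z \<in> Zs \<Longrightarrow> AE x in M. arctan (Z x) \<le> (SUP Z'\<in>C. arctan (Z' x))"
    using countable_subfamily_dominates_arctan_AE[OF meas \<open>Zs \<noteq> {}\<close>] by blast
  define S where "S x = (SUP Z\<in>C. arctan (Z x))" for x
  have bdd: "bdd_above ((\<lambda>Z. arctan (Z x)) ` C)" for x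
    using arctan_bounded by (intro bdd_aboveI[of _ "pi/2"]) (auto simp: less_imp_le)
  have S_le: "S x \<le> arctan (Y x)" if "\<forall>Z\<in>C. Z x \<le> Y x" for Y x
    using that \<open>C \<noteq> {}\<close> unfolding S_def by (intro cSUP_least) (auto simp: arctan_le_iff)
  have S_gt: "- (pi/2) < S x" for x
  proof -
    obtain Z0 where "Z0 \<in> C" using \<open>C \<noteq> {}\<close> by blast
    then have "arctan (Z0 x) \<le> S x" unfolding S_def by (rule cSUP_upper[OF _ bdd])
    then show ?thesis using arctan_bounded[of "Z0 x"] by linarith
  qed
  have "AE x in M. \<forall>Z\<in>C. Z x \<le> W x" using C W_upper by (subst AE_ball_countable) auto
  then have S_lt: "AE x in M. S x < pi/2"
    by eventually_elim (use S_le arctan_bounded in \<open>smt (verit)\<close>)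
  have S_meas: "S \<in> borel_measurable M"
    unfolding S_def using C meas bdd by (intro borel_measurable_cSUP) auto
  show ?thesis
  proof (intro exI[of _ "\<lambda>x. tan (S x)"] conjI ballI impI)
    show "(\<lambda>x. tan (S x)) \<in> borel_measurable M" unfolding tan_def using S_meas by measurable
  next
    fix Z assume "Z \<in> Zs"
    from S_dom[OF this] S_lt show "AE x in M. Z x \<le> tan (S x)"
    proof eventually_elim
      case (elim x)
      then have "tan (arctan (Z x)) \<le> tan (S x)"
        using arctan_bounded[of "Z x"] by (intro tan_mono_le) (auto simp: S_def)
      then show ?case by (simp add: tan_arctan)
    qed
  next
    fix Y' assume "\<forall>Z\<in>Zs. AE x in M. Z x \<le> Y' x"
    then have "AE x in M. \<forall>Z\<in>C. Z x \<le> Y' x" using C by (subst AE_ball_countable) auto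
    then show "AE x in M. tan (S x) \<le> Y' x"
    proof eventually_elim
      case (elim x)
      then have "tan (S x) \<le> tan (arctan (Y' x))"
        using S_le[where Y=Y', OF elim] S_gt[of x] arctan_bounded[of "Y' x"] by (intro tan_mono_le) auto
      then show ?case by (simp add: tan_arctan)
    qed
  qed
qed

lemma (in finite_measure) ess_sup_family:
  fixes Zs :: "('a \<Rightarrow> real) set"
  assumes "Zs \<subseteq> borel_measurable M" "Zs \<noteq> {}"
    and "W \<in> borel_measurable M" "\<And>Z. Z \<in> Zs \<Longrightarrow> AE x in M. Z x \<le> W x"
  shows "ess_sup_family M Zs \<in> borel_measurable M"
    and "\<And>Z. Z \<in> Zs \<Longrightarrow> AE x in M. Z x \<le> ess_sup_family M Zs x"
    and "\<And>Y. Y \<in> borel_measurable M \<Longrightarrow> (\<And>Z. Z \<in> Zs \<Longrightarrow> AE x in M. Z x \<le> Y x) \<Longrightarrow>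
           AE x in M. ess_sup_family M Zs x \<le> Y x"
  using someI_ex[OF ess_sup_family_exists[OF assms], folded ess_sup_family_def] by blast+

section \<open>Integrals over random intervals\<close>

definition pathwise_integral ::
  "(real \<Rightarrow> 'a \<Rightarrow> real) \<Rightarrow> ('a \<Rightarrow> real) \<Rightarrow> ('a \<Rightarrow> real) \<Rightarrow> 'a \<Rightarrow> real" where
  "pathwise_integral k \<rho> \<nu> \<omega> = (LINT s:{\<rho> \<omega>..\<nu> \<omega>}|lborel. k s \<omega>)"

lemma set_integral_Icc_append:
  fixes f :: "real \<Rightarrow> real"
  assumes f: "set_integrable lborel {x..z} f" and "x \<le> y" "y \<le> z"
  shows "(LINT s:{x..y}|lborel. f s) + (LINT s:{y..z}|lborel. f s) = (LINT s:{x..z}|lborel. f s)"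
proof -
  have "set_integrable lborel {x..y} f" "set_integrable lborel {y..z} f"
    using assms by (auto intro: set_integrable_subset[OF f])
  then have "(LINT s:{x..y} \<union> {y..z}|lborel. f s) = (LINT s:{x..y}|lborel. f s) + (LINT s:{y..z}|lborel. f s)"
    using AE_lborel_singleton[of y] by (intro set_integral_Un_AE) (auto elim!: eventually_mono)
  moreover have "{x..y} \<union> {y..z} = {x..z}" using assms by auto
  ultimately show ?thesis by simp
qed

lemma abs_set_integral_le:
  fixes f g :: "'a \<Rightarrow> real"
  assumes "set_integrable M A f" "set_integrable M A g" "\<And>x. x \<in> A \<Longrightarrow> \<bar>f x\<bar> \<le> g x"
  shows "\<bar>LINT x:A|M. f x\<bar> \<le> (LINT x:A|M. g x)"
  using set_integral_norm_bound[OF assms(1)] set_integral_mono[OF set_integrable_norm[OF assms(1)] assms(2)]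
    assms(3) by force

lemma borel_measurable_set_integral_Icc:
  fixes h :: "real \<Rightarrow> 'a \<Rightarrow> real"
  assumes h[measurable]: "(\<lambda>(s, \<omega>). h s \<omega>) \<in> borel_measurable (restrict_space borel {l..r} \<Otimes>\<^sub>M N)"
    and [measurable]: "a \<in> borel_measurable N" "b \<in> borel_measurable N"
    and ab: "\<And>\<omega>. \<omega> \<in> space N \<Longrightarrow> l \<le> a \<omega> \<and> b \<omega> \<le> r" and "l \<le> r"
  shows "(\<lambda>\<omega>. LINT s:{a \<omega>..b \<omega>}|lborel. h s \<omega>) \<in> borel_measurable N"
proof -
  \<comment> \<open>Only the values of h on {l..r}, where it is jointly measurable, enter the integral.\<close>
  define cl where "cl s = max l (min s r)" for s :: real
  have eq: "(LINT s:{a \<omega>..b \<omega>}|lborel. h s \<omega>) =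
      (\<integral>s. (if a \<omega> \<le> s \<and> s \<le> b \<omega> then 1 else 0) * h (cl s) \<omega> \<partial>lborel)" if "\<omega> \<in> space N" for \<omega>
    unfolding set_lebesgue_integral_def
    using ab[OF that] by (intro Bochner_Integration.integral_cong) (auto simp: cl_def indicator_def)
  have "(\<lambda>x. (cl (snd x), fst x)) \<in> N \<Otimes>\<^sub>M lborel \<rightarrow>\<^sub>M restrict_space borel {l..r} \<Otimes>\<^sub>M N"
  proof (intro measurable_Pair measurable_restrict_space2)
    show "(\<lambda>x. cl (snd x)) \<in> space (N \<Otimes>\<^sub>M lborel) \<rightarrow> {l..r}" using \<open>l \<le> r\<close> by (auto simp: cl_def)
  qed (auto simp: cl_def)
  from measurable_compose[OF this h]
  have [measurable]: "(\<lambda>x. h (cl (snd x)) (fst x)) \<in> borel_measurable (N \<Otimes>\<^sub>M lborel)" by simp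
  have "(\<lambda>\<omega>. \<integral>s. (if a \<omega> \<le> s \<and> s \<le> b \<omega> then 1 else 0) * h (cl s) \<omega> \<partial>lborel) \<in> borel_measurable N"
    by (rule lborel.borel_measurable_lebesgue_integral) (simp add: case_prod_beta)
  then show ?thesis by (rule measurable_cong[THEN iffD1, rotated]) (simp add: eq)
qed

section \<open>Conditional expectations at stopping times\<close>

lemma real_cond_exp_sets_cong:
  assumes "space A = space B" "sets A = sets B"
  shows "real_cond_exp M A = real_cond_exp M B"
proof -
  have restr: "restr_to_subalg N A = restr_to_subalg N B" for N
    unfolding restr_to_subalg_def using assms(2) by metis
  have subalg: "subalgebra M A = subalgebra M B"
    unfolding subalgebra_def using assms by metis
  show ?thesis unfolding real_cond_exp_def nn_cond_exp_def restr subalg ..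
qed

lemma (in complete_measure) borel_measurable_AE_cong_subalgebra:
  fixes f h :: "'a \<Rightarrow> real"
  assumes G: "space G = space M" "sets G \<subseteq> sets M" "null_sets M \<subseteq> sets G"
    and f: "f \<in> borel_measurable G" and ae: "AE \<omega> in M. f \<omega> = h \<omega>"
  shows "h \<in> borel_measurable G"
proof (rule measurableI)
  fix B :: "real set" assume B: "B \<in> sets borel"
  define N where "N = {\<omega>\<in>space M. f \<omega> \<noteq> h \<omega>}"
  have N: "N \<in> null_sets M" unfolding N_def using ae by (subst (asm) AE_iff_null_sets) auto
  have "h -` B \<inter> space G = ((f -` B \<inter> space G) - N) \<union> (h -` B \<inter> N)"
    using G(1) by (auto simp: N_def)
  moreover have "f -` B \<inter> space G \<in> sets G" using f B by (rule measurable_sets)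
  moreover have "N \<in> sets G" "h -` B \<inter> N \<in> sets G"
    using N G(3) complete2[OF _ N, of "h -` B \<inter> N"] by auto
  ultimately show "h -` B \<inter> space G \<in> sets G" by auto
qed simp

locale complete_filtration = prob_space M + complete_measure M for M :: "'a measure" +
  fixes F :: "real \<Rightarrow> 'a measure"
  assumes F_space: "\<And>t. space (F t) = space M"
    and F_subset: "\<And>t. sets (F t) \<subseteq> sets M"
    and F_mono: "\<And>s t. s \<le> t \<Longrightarrow> sets (F s) \<subseteq> sets (F t)"
    and F_null: "\<And>t. null_sets M \<subseteq> sets (F t)"
begin

sublocale filtration "space M" F
  by standard (auto simp: F_space F_mono)

lemma stopping_time_measurable: "stopping_time F \<sigma> \<Longrightarrow> \<sigma> \<in> borel_measurable M"
  by (rule measurable_stopping_time[of F \<sigma> M]) (auto simp: F_space F_subset)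

lemma sets_pre_sigma_subset:
  assumes "stopping_time F \<sigma>"
  shows "sets (pre_sigma \<sigma>) \<subseteq> sets M"
proof
  fix A assume A: "A \<in> sets (pre_sigma \<sigma>)"
  have "{\<omega>\<in>A. \<sigma> \<omega> \<le> real n} \<in> sets M" for n
    using sets_pre_sigmaD[OF assms A, of "real n"] F_subset by blast
  then have "(\<Union>n. {\<omega>\<in>A. \<sigma> \<omega> \<le> real n}) \<in> sets M" by blast
  also have "(\<Union>n. {\<omega>\<in>A. \<sigma> \<omega> \<le> real n}) = A"
    by (auto intro: real_nat_ceiling_ge)
  finally show "A \<in> sets M" .
qed

lemma subalgebra_pre_sigma: "stopping_time F \<sigma> \<Longrightarrow> subalgebra M (pre_sigma \<sigma>)"
  using sets_pre_sigma_subset by (auto simp: subalgebra_def space_pre_sigma)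

lemma borel_measurable_pre_sigmaD:
  "stopping_time F \<sigma> \<Longrightarrow> f \<in> borel_measurable (pre_sigma \<sigma>) \<Longrightarrow> f \<in> borel_measurable M"
  using measurable_from_subalg[OF subalgebra_pre_sigma] by blast

lemma sigma_finite_subalgebra_pre_sigma:
  "stopping_time F \<sigma> \<Longrightarrow> sigma_finite_subalgebra M (pre_sigma \<sigma>)"
  by (rule finite_measure_subalgebra_is_sigma_finite)
    (auto simp: finite_measure_subalgebra_def finite_measure_subalgebra_axioms_def
      subalgebra_pre_sigma finite_measure_axioms)

lemma null_subset_in_F: "N \<subseteq> A \<Longrightarrow> A \<in> null_sets M \<Longrightarrow> N \<in> sets (F t)"
  using F_null complete2 by blast

lemma null_sets_pre_sigma:
  assumes "stopping_time F \<sigma>" "N \<in> null_sets M"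
  shows "N \<in> sets (pre_sigma \<sigma>)"
  using assms by (intro sets_pre_sigmaI) (auto intro: null_subset_in_F)

lemma borel_measurable_pre_sigma_AE_cong:
  fixes f h :: "'a \<Rightarrow> real"
  assumes "stopping_time F \<sigma>" "f \<in> borel_measurable (pre_sigma \<sigma>)" "AE \<omega> in M. f \<omega> = h \<omega>"
  shows "h \<in> borel_measurable (pre_sigma \<sigma>)"
proof (rule borel_measurable_AE_cong_subalgebra[OF _ _ _ assms(2,3)])
  show "null_sets M \<subseteq> sets (pre_sigma \<sigma>)" using null_sets_pre_sigma[OF assms(1)] by blast
qed (simp_all add: space_pre_sigma sets_pre_sigma_subset[OF assms(1)])

lemma sets_pre_sigma_mono_AE:
  assumes \<sigma>: "stopping_time F \<sigma>" and \<nu>: "stopping_time F \<nu>" and le: "AE \<omega> in M. \<sigma> \<omega> \<le> \<nu> \<omega>"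
  shows "sets (pre_sigma \<sigma>) \<subseteq> sets (pre_sigma \<nu>)"
proof
  fix A assume A: "A \<in> sets (pre_sigma \<sigma>)"
  then have A_space: "A \<subseteq> space M" using sets.sets_into_space space_pre_sigma by blast
  have [measurable]: "\<sigma> \<in> borel_measurable M" "\<nu> \<in> borel_measurable M"
    using \<sigma> \<nu> by (auto intro: stopping_time_measurable)
  have N: "{\<omega>\<in>space M. \<not> \<sigma> \<omega> \<le> \<nu> \<omega>} \<in> null_sets M"
    using le by (subst (asm) AE_iff_null_sets) auto
  show "A \<in> sets (pre_sigma \<nu>)"
  proof (rule sets_pre_sigmaI[OF \<nu>])
    fix t
    have "{\<omega>\<in>A. \<nu> \<omega> \<le> t} =
        ({\<omega>\<in>A. \<sigma> \<omega> \<le> t} \<inter> {\<omega>\<in>space M. \<nu> \<omega> \<le> t}) \<union> {\<omega>\<in>A. \<nu> \<omega> \<le> t \<and> \<not> \<sigma> \<omega> \<le> t}"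
      using A_space by auto
    moreover have "{\<omega>\<in>A. \<sigma> \<omega> \<le> t} \<in> sets (F t)" by (rule sets_pre_sigmaD[OF \<sigma> A])
    moreover have "{\<omega>\<in>space M. \<nu> \<omega> \<le> t} \<in> sets (F t)"
      using stopping_timeD[OF \<nu>, of t] by (auto simp: pred_def F_space)
    moreover have "{\<omega>\<in>A. \<nu> \<omega> \<le> t \<and> \<not> \<sigma> \<omega> \<le> t} \<in> sets (F t)"
      by (rule null_subset_in_F[OF _ N]) (use A_space in auto)
    ultimately show "{\<omega>\<in>A. \<nu> \<omega> \<le> t} \<in> sets (F t)" by auto
  qed
qed

lemma sets_pre_sigma_const: "sets (pre_sigma (\<lambda>_. t)) = sets (F t)"
proof
  show "sets (pre_sigma (\<lambda>_. t)) \<subseteq> sets (F t)"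
    using sets_pre_sigmaD[OF stopping_time_const, of _ t t] by auto
  show "sets (F t) \<subseteq> sets (pre_sigma (\<lambda>_. t))"
  proof
    fix A assume A: "A \<in> sets (F t)"
    show "A \<in> sets (pre_sigma (\<lambda>_. t))"
    proof (rule sets_pre_sigmaI[OF stopping_time_const])
      fix s show "{\<omega>\<in>A. t \<le> s} \<in> sets (F s)"
        using A F_mono[of t s] by (cases "t \<le> s") auto
    qed
  qed
qed

lemma stopping_time_add_const:
  assumes "stopping_time F \<nu>" "0 \<le> c"
  shows "stopping_time F (\<lambda>\<omega>. \<nu> \<omega> + c)"
proof (rule stopping_timeI)
  fix t
  have "Measurable.pred (F t) (\<lambda>\<omega>. \<nu> \<omega> \<le> t - c)"
    using stopping_time_le_const[OF assms(1)] assms(2) by simp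
  then show "Measurable.pred (F t) (\<lambda>\<omega>. \<nu> \<omega> + c \<le> t)" by (simp add: le_diff_eq)
qed

lemma borel_measurable_min_stopping_time:
  assumes "stopping_time F \<rho>"
  shows "(\<lambda>\<omega>. min (\<rho> \<omega>) r) \<in> borel_measurable (F r)"
proof (rule borel_measurableI_le)
  fix c
  show "{\<omega> \<in> space (F r). min (\<rho> \<omega>) r \<le> c} \<in> sets (F r)"
  proof (cases "r \<le> c")
    case True
    then have "{\<omega> \<in> space (F r). min (\<rho> \<omega>) r \<le> c} = space (F r)" by auto
    then show ?thesis by simp
  next
    case False
    then have "{\<omega> \<in> space (F r). min (\<rho> \<omega>) r \<le> c} = {\<omega> \<in> space (F r). \<rho> \<omega> \<le> c}" by auto
    also have "\<dots> \<in> sets (F r)"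
      using stopping_time_le_const[OF assms, of c r] False by (simp add: pred_def)
    finally show ?thesis .
  qed
qed

lemma borel_measurable_pre_sigma_indicator_less:
  assumes "stopping_time F \<nu>"
  shows "(\<lambda>\<omega>. indicator {\<omega>. \<nu> \<omega> < c} \<omega> :: real) \<in> borel_measurable (pre_sigma \<nu>)"
proof -
  have [measurable]: "\<nu> \<in> borel_measurable (pre_sigma \<nu>)"
    by (rule measurable_stopping_time_pre_sigma[OF assms])
  show ?thesis unfolding indicator_def by measurable
qed

lemma borel_measurable_F_pathwise_integral_min:
  fixes h :: "real \<Rightarrow> 'a \<Rightarrow> real"
  assumes h: "progressive F T h" and \<rho>: "stopping_time F \<rho>" and \<nu>: "stopping_time F \<nu>"
    and \<rho>_nonneg: "\<And>\<omega>. \<omega> \<in> space M \<Longrightarrow> 0 \<le> \<rho> \<omega>" and r: "0 \<le> r" "r \<le> T"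
  shows "pathwise_integral h (\<lambda>\<omega>. min (\<rho> \<omega>) r) (\<lambda>\<omega>. min (\<nu> \<omega>) r) \<in> borel_measurable (F r)"
  unfolding pathwise_integral_def
proof (rule borel_measurable_set_integral_Icc)
  show "(\<lambda>(s, \<omega>). h s \<omega>) \<in> borel_measurable (restrict_space borel {0..r} \<Otimes>\<^sub>M F r)"
    using h r unfolding progressive_def by auto
  show "(\<lambda>\<omega>. min (\<rho> \<omega>) r) \<in> borel_measurable (F r)" "(\<lambda>\<omega>. min (\<nu> \<omega>) r) \<in> borel_measurable (F r)"
    using \<rho> \<nu> by (auto intro: borel_measurable_min_stopping_time)
  show "0 \<le> min (\<rho> \<omega>) r \<and> min (\<nu> \<omega>) r \<le> r" if "\<omega> \<in> space (F r)" for \<omega>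
    using \<rho>_nonneg[of \<omega>] that r by (simp add: F_space)
qed (use r in simp)

lemma borel_measurable_pre_sigma_pathwise_integral_strict:
  fixes h :: "real \<Rightarrow> 'a \<Rightarrow> real"
  assumes h: "progressive F T h" and \<rho>: "stopping_time F \<rho>" and \<nu>: "stopping_time F \<nu>"
    and order: "\<And>\<omega>. \<omega> \<in> space M \<Longrightarrow> 0 \<le> \<rho> \<omega> \<and> \<rho> \<omega> \<le> \<nu> \<omega> \<and> \<nu> \<omega> \<le> T"
  shows "pathwise_integral h \<rho> \<nu> \<in> borel_measurable (pre_sigma \<nu>)"
proof (rule measurableI)
  fix B :: "real set" assume B: "B \<in> sets borel"
  let ?A = "pathwise_integral h \<rho> \<nu> -` B \<inter> space (pre_sigma \<nu>)"
  obtain \<omega>0 where "\<omega>0 \<in> space M" using not_empty by blast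
  then have "0 \<le> T" using order by force
  show "?A \<in> sets (pre_sigma \<nu>)"
  proof (rule sets_pre_sigmaI[OF \<nu>])
    fix t
    show "{\<omega> \<in> ?A. \<nu> \<omega> \<le> t} \<in> sets (F t)"
    proof (cases "t < 0")
      case True
      have "{\<omega> \<in> ?A. \<nu> \<omega> \<le> t} = {}"
      proof (rule equals0I)
        fix \<omega> assume "\<omega> \<in> {\<omega> \<in> ?A. \<nu> \<omega> \<le> t}"
        then have "\<omega> \<in> space M" "\<nu> \<omega> \<le> t" by (auto simp: space_pre_sigma)
        with order True show False by force
      qed
      then show ?thesis by (metis sets.empty_sets)
    next
      case False
      \<comment> \<open>On the event where nu is at most t, only the paths up to r = min t T enter the integral.\<close>
      define r where "r = min t T"
      have r: "0 \<le> r" "r \<le> T" "r \<le> t" using False \<open>0 \<le> T\<close> by (auto simp: r_def)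
      define f where "f = pathwise_integral h (\<lambda>\<omega>. min (\<rho> \<omega>) r) (\<lambda>\<omega>. min (\<nu> \<omega>) r)"
      have "f -` B \<inter> space (F r) \<in> sets (F t)"
        using measurable_sets[OF borel_measurable_F_pathwise_integral_min[OF h \<rho> \<nu> _ r(1,2)] B]
          F_mono[OF r(3)] order by (auto simp: f_def)
      moreover have "{\<omega>\<in>space (F t). \<nu> \<omega> \<le> t} \<in> sets (F t)"
        using stopping_timeD[OF \<nu>, of t] by (auto simp: pred_def)
      moreover have "f \<omega> = pathwise_integral h \<rho> \<nu> \<omega>" if "\<omega> \<in> space M" "\<nu> \<omega> \<le> t" for \<omega>
        using order[OF that(1)] that(2) by (simp add: f_def r_def pathwise_integral_def)
      then have "{\<omega> \<in> ?A. \<nu> \<omega> \<le> t} = (f -` B \<inter> space (F r)) \<inter> {\<omega>\<in>space (F t). \<nu> \<omega> \<le> t}"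
        by (auto simp: F_space space_pre_sigma)
      ultimately show ?thesis by auto
    qed
  qed
qed simp

lemma borel_measurable_pre_sigma_pathwise_integral:
  fixes h :: "real \<Rightarrow> 'a \<Rightarrow> real"
  assumes h: "progressive F T h" and \<rho>: "stopping_time F \<rho>" and \<nu>: "stopping_time F \<nu>"
    and order: "AE \<omega> in M. 0 \<le> \<rho> \<omega> \<and> \<rho> \<omega> \<le> \<nu> \<omega> \<and> \<nu> \<omega> \<le> T"
  shows "pathwise_integral h \<rho> \<nu> \<in> borel_measurable (pre_sigma \<nu>)"
proof -
  \<comment> \<open>Clip the times so that the order holds everywhere; this changes nothing almost surely.\<close>
  define \<nu>' where "\<nu>' \<omega> = max 0 (min (\<nu> \<omega>) T)" for \<omega>
  define \<rho>' where "\<rho>' \<omega> = max 0 (min (\<rho> \<omega>) (\<nu>' \<omega>))" for \<omega>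
  have \<nu>': "stopping_time F \<nu>'" unfolding \<nu>'_def
    by (intro stopping_time_max stopping_time_min stopping_time_const \<nu>)
  have \<rho>': "stopping_time F \<rho>'" unfolding \<rho>'_def
    by (intro stopping_time_max stopping_time_min stopping_time_const \<rho> \<nu>')
  have "AE \<omega> in M. 0 \<le> T" using order by eventually_elim auto
  then have "0 \<le> T" by simp
  then have "pathwise_integral h \<rho>' \<nu>' \<in> borel_measurable (pre_sigma \<nu>')"
    by (intro borel_measurable_pre_sigma_pathwise_integral_strict[OF h \<rho>' \<nu>'])
      (simp add: \<rho>'_def \<nu>'_def)
  moreover have clipped: "AE \<omega> in M. \<nu>' \<omega> = \<nu> \<omega> \<and> \<rho>' \<omega> = \<rho> \<omega>"
    using order by eventually_elim (simp add: \<rho>'_def \<nu>'_def)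
  then have "sets (pre_sigma \<nu>') = sets (pre_sigma \<nu>)"
    by (intro antisym sets_pre_sigma_mono_AE \<nu>' \<nu>) (auto elim: eventually_mono)
  ultimately have "pathwise_integral h \<rho>' \<nu>' \<in> borel_measurable (pre_sigma \<nu>)"
    by (simp cong: measurable_cong_sets)
  moreover have "AE \<omega> in M. pathwise_integral h \<rho>' \<nu>' \<omega> = pathwise_integral h \<rho> \<nu> \<omega>"
    using clipped by eventually_elim (simp add: pathwise_integral_def)
  ultimately show ?thesis by (rule borel_measurable_pre_sigma_AE_cong[OF \<nu>])
qed

lemma set_borel_measurable_progressive_path:
  fixes h :: "real \<Rightarrow> 'a \<Rightarrow> real"
  assumes h: "progressive F T h" and "0 \<le> T" and \<omega>: "\<omega> \<in> space M"
  shows "set_borel_measurable lborel {0..T} (\<lambda>s. h s \<omega>)"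
proof -
  have h_T: "(\<lambda>(s, \<omega>). h s \<omega>) \<in> borel_measurable (restrict_space borel {0..T} \<Otimes>\<^sub>M F T)"
    using h \<open>0 \<le> T\<close> unfolding progressive_def by auto
  have "(\<lambda>s. (s, \<omega>)) \<in> restrict_space borel {0..T} \<rightarrow>\<^sub>M restrict_space borel {0..T} \<Otimes>\<^sub>M F T"
    using \<omega> by (intro measurable_Pair measurable_ident_sets[OF refl] measurable_const) (auto simp: F_space)
  from measurable_compose[OF this h_T]
  have "(\<lambda>s. h s \<omega>) \<in> borel_measurable (restrict_space borel {0..T})" by simp
  then show ?thesis
    unfolding set_borel_measurable_def by (subst (asm) borel_measurable_restrict_space_iff) auto
qed

lemma borel_measurable_cexp_st[measurable]: "cexp_st M F \<sigma> f \<in> borel_measurable M"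
  unfolding cexp_st_def by simp

lemma cexp_st_const_time: "cexp_st M F (\<lambda>_. t) = real_cond_exp M (F t)"
  unfolding cexp_st_def
  by (rule real_cond_exp_sets_cong) (simp_all add: space_pre_sigma F_space sets_pre_sigma_const)

lemma integrable_cexp_st: "stopping_time F \<sigma> \<Longrightarrow> integrable M f \<Longrightarrow> integrable M (cexp_st M F \<sigma> f)"
  unfolding cexp_st_def
  using sigma_finite_subalgebra.real_cond_exp_int(1)[OF sigma_finite_subalgebra_pre_sigma] by blast

lemma cexp_st_tower:
  assumes \<sigma>: "stopping_time F \<sigma>" and \<nu>: "stopping_time F \<nu>" and "AE \<omega> in M. \<sigma> \<omega> \<le> \<nu> \<omega>"
    and "integrable M f"
  shows "AE \<omega> in M. cexp_st M F \<sigma> (cexp_st M F \<nu> f) \<omega> = cexp_st M F \<sigma> f \<omega>"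
  unfolding cexp_st_def
proof (rule sigma_finite_subalgebra.real_cond_exp_nested_subalg[OF sigma_finite_subalgebra_pre_sigma[OF \<sigma>]])
  show "subalgebra (pre_sigma \<nu>) (pre_sigma \<sigma>)"
    using sets_pre_sigma_mono_AE[OF \<sigma> \<nu>] assms(3) by (simp add: subalgebra_def space_pre_sigma)
qed (use subalgebra_pre_sigma[OF \<nu>] assms(4) in auto)

lemma cexp_st_mult_left:
  assumes "stopping_time F \<sigma>" "f \<in> borel_measurable (pre_sigma \<sigma>)" "g \<in> borel_measurable M"
    "integrable M (\<lambda>x. f x * g x)"
  shows "AE \<omega> in M. cexp_st M F \<sigma> (\<lambda>x. f x * g x) \<omega> = f \<omega> * cexp_st M F \<sigma> g \<omega>"
  unfolding cexp_st_def using sigma_finite_subalgebra_pre_sigma[OF assms(1)]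
  by (rule sigma_finite_subalgebra.real_cond_exp_mult[OF _ assms(2-)])

lemma cexp_st_mono:
  assumes "stopping_time F \<sigma>" "AE x in M. f x \<le> g x" "integrable M f" "integrable M g"
  shows "AE \<omega> in M. cexp_st M F \<sigma> f \<omega> \<le> cexp_st M F \<sigma> g \<omega>"
  unfolding cexp_st_def using sigma_finite_subalgebra_pre_sigma[OF assms(1)]
  by (rule sigma_finite_subalgebra.real_cond_exp_mono[OF _ assms(2-)])

lemma cexp_st_nonneg:
  assumes "stopping_time F \<sigma>" "AE x in M. 0 \<le> f x" "f \<in> borel_measurable M"
  shows "AE \<omega> in M. 0 \<le> cexp_st M F \<sigma> f \<omega>"
  unfolding cexp_st_def using sigma_finite_subalgebra_pre_sigma[OF assms(1)]
  by (rule sigma_finite_subalgebra.real_cond_exp_pos[OF _ assms(2-)])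

lemma cexp_st_cong:
  assumes "stopping_time F \<sigma>" "AE x in M. f x = g x" "f \<in> borel_measurable M" "g \<in> borel_measurable M"
  shows "AE \<omega> in M. cexp_st M F \<sigma> f \<omega> = cexp_st M F \<sigma> g \<omega>"
  unfolding cexp_st_def using sigma_finite_subalgebra_pre_sigma[OF assms(1)]
  by (rule sigma_finite_subalgebra.real_cond_exp_cong[OF _ assms(2-)])

lemma cexp_st_measurable_self:
  assumes "stopping_time F \<sigma>" "integrable M f" "f \<in> borel_measurable (pre_sigma \<sigma>)"
  shows "AE \<omega> in M. cexp_st M F \<sigma> f \<omega> = f \<omega>"
  unfolding cexp_st_def using sigma_finite_subalgebra_pre_sigma[OF assms(1)]
  by (rule sigma_finite_subalgebra.real_cond_exp_F_meas[OF _ assms(2-)])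

lemma cexp_st_tower_mult:
  assumes \<rho>: "stopping_time F \<rho>" and \<nu>: "stopping_time F \<nu>" and le: "AE \<omega> in M. \<rho> \<omega> \<le> \<nu> \<omega>"
    and f: "f \<in> borel_measurable (pre_sigma \<nu>)" and g[measurable]: "g \<in> borel_measurable M"
    and fg: "integrable M (\<lambda>\<omega>. f \<omega> * g \<omega>)"
  shows "integrable M (\<lambda>\<omega>. f \<omega> * cexp_st M F \<nu> g \<omega>)"
    and "AE \<omega> in M. cexp_st M F \<rho> (\<lambda>\<omega>. f \<omega> * cexp_st M F \<nu> g \<omega>) \<omega> =
      cexp_st M F \<rho> (\<lambda>\<omega>. f \<omega> * g \<omega>) \<omega>"
proof -
  have [measurable]: "f \<in> borel_measurable M" by (rule borel_measurable_pre_sigmaD[OF \<nu> f])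
  have pull: "AE \<omega> in M. cexp_st M F \<nu> (\<lambda>\<omega>. f \<omega> * g \<omega>) \<omega> = f \<omega> * cexp_st M F \<nu> g \<omega>"
    by (rule cexp_st_mult_left[OF \<nu> f g fg])
  show "integrable M (\<lambda>\<omega>. f \<omega> * cexp_st M F \<nu> g \<omega>)"
    by (rule integrable_cong_AE_imp[OF integrable_cexp_st[OF \<nu> fg] _ pull]) measurable
  have "AE \<omega> in M. f \<omega> * cexp_st M F \<nu> g \<omega> = cexp_st M F \<nu> (\<lambda>\<omega>. f \<omega> * g \<omega>) \<omega>"
    using pull by eventually_elim simp
  then have "AE \<omega> in M. cexp_st M F \<rho> (\<lambda>\<omega>. f \<omega> * cexp_st M F \<nu> g \<omega>) \<omega> =
      cexp_st M F \<rho> (cexp_st M F \<nu> (\<lambda>\<omega>. f \<omega> * g \<omega>)) \<omega>"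
    by (rule cexp_st_cong[OF \<rho>]) measurable
  with cexp_st_tower[OF \<rho> \<nu> le fg]
  show "AE \<omega> in M. cexp_st M F \<rho> (\<lambda>\<omega>. f \<omega> * cexp_st M F \<nu> g \<omega>) \<omega> =
      cexp_st M F \<rho> (\<lambda>\<omega>. f \<omega> * g \<omega>) \<omega>"
    by eventually_elim simp
qed

lemma cexp_st_mono_on_event:
  assumes \<sigma>: "stopping_time F \<sigma>" and P: "Measurable.pred (pre_sigma \<sigma>) P"
    and f: "integrable M f" and h: "integrable M h" and le: "AE \<omega> in M. P \<omega> \<longrightarrow> f \<omega> \<le> h \<omega>"
  shows "AE \<omega> in M. P \<omega> \<longrightarrow> cexp_st M F \<sigma> f \<omega> \<le> cexp_st M F \<sigma> h \<omega>"
proof -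
  define I :: "'a \<Rightarrow> real" where "I \<omega> = (if P \<omega> then 1 else 0)" for \<omega>
  have I_pre: "I \<in> borel_measurable (pre_sigma \<sigma>)" unfolding I_def using P by measurable
  have [measurable]: "I \<in> borel_measurable M" by (rule borel_measurable_pre_sigmaD[OF \<sigma> I_pre])
  have int: "integrable M (\<lambda>\<omega>. I \<omega> * u \<omega>)" if "integrable M u" for u
  proof (rule Bochner_Integration.integrable_bound[OF that])
    show "(\<lambda>\<omega>. I \<omega> * u \<omega>) \<in> borel_measurable M" using borel_measurable_integrable[OF that] by measurable
  qed (auto simp: I_def)
  have "AE \<omega> in M. I \<omega> * f \<omega> \<le> I \<omega> * h \<omega>" using le by eventually_elim (simp add: I_def)
  then have "AE \<omega> in M. cexp_st M F \<sigma> (\<lambda>\<omega>. I \<omega> * f \<omega>) \<omega> \<le> cexp_st M F \<sigma> (\<lambda>\<omega>. I \<omega> * h \<omega>) \<omega>"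
    by (rule cexp_st_mono[OF \<sigma> _ int[OF f] int[OF h]])
  moreover have "AE \<omega> in M. cexp_st M F \<sigma> (\<lambda>\<omega>. I \<omega> * f \<omega>) \<omega> = I \<omega> * cexp_st M F \<sigma> f \<omega>"
    by (rule cexp_st_mult_left[OF \<sigma> I_pre borel_measurable_integrable[OF f] int[OF f]])
  moreover have "AE \<omega> in M. cexp_st M F \<sigma> (\<lambda>\<omega>. I \<omega> * h \<omega>) \<omega> = I \<omega> * cexp_st M F \<sigma> h \<omega>"
    by (rule cexp_st_mult_left[OF \<sigma> I_pre borel_measurable_integrable[OF h] int[OF h]])
  ultimately show ?thesis by eventually_elim (auto simp: I_def)
qed

end

lemma complete_filtration_brownian_filtration:
  assumes "prob_space M" "complete_measure M" and B: "std_brownian_motion M T B"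
  shows "complete_filtration M (brownian_filtration M B T)"
proof -
  define H where "H t = {B r -` A \<inter> space M | r A. r \<in> {0..min t T} \<and> A \<in> sets borel}" for t
  define G where "G t = H t \<union> null_sets M" for t
  have "B r \<in> borel_measurable M" if "r \<in> {0..T}" for r
    using B that unfolding std_brownian_motion_def by auto
  then have G_sets: "G t \<subseteq> sets M" for t
    unfolding G_def H_def by (auto intro!: measurable_sets)
  then have G_Pow: "G t \<subseteq> Pow (space M)" for t using sets.sets_into_space by blast
  have bf: "brownian_filtration M B T t = sigma (space M) (G t)" for t
    unfolding brownian_filtration_def G_def H_def ..
  have sets_bf: "sets (brownian_filtration M B T t) = sigma_sets (space M) (G t)" for t
    unfolding bf using G_Pow by (simp add: sets_measure_of)
  have H_mono: "H s \<subseteq> H t" if "s \<le> t" for s t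
  proof
    fix x assume "x \<in> H s"
    then obtain r A where "x = B r -` A \<inter> space M" "r \<in> {0..min s T}" "A \<in> sets borel"
      unfolding H_def by blast
    moreover have "r \<in> {0..min t T}" using \<open>r \<in> {0..min s T}\<close> that by auto
    ultimately show "x \<in> H t" unfolding H_def by blast
  qed
  show ?thesis
  proof (intro complete_filtration.intro complete_filtration_axioms.intro)
    show "space (brownian_filtration M B T t) = space M" for t
      unfolding bf using G_Pow by (simp add: space_measure_of_conv)
    show "sets (brownian_filtration M B T t) \<subseteq> sets M" for t
      unfolding sets_bf using G_sets by (rule sets.sigma_sets_subset)
    show "sets (brownian_filtration M B T s) \<subseteq> sets (brownian_filtration M B T t)" if "s \<le> t" for s t
      unfolding sets_bf G_def using H_mono[OF that] by (intro sigma_sets_mono') auto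
    show "null_sets M \<subseteq> sets (brownian_filtration M B T t)" for t
      unfolding sets_bf G_def by (auto intro: sigma_sets.Basic)
  qed (fact assms)+
qed

section \<open>Exponential moments of dominated pathwise integrals\<close>

locale dominating_rate = complete_filtration M F for M :: "'a measure" and F +
  fixes T :: real and \<gamma> :: "real \<Rightarrow> 'a \<Rightarrow> real"
  assumes T_nonneg: "0 \<le> T"
    and \<gamma>_progressive: "progressive F T \<gamma>"
    and \<gamma>_nonneg: "\<And>t \<omega>. t \<in> {0..T} \<Longrightarrow> \<omega> \<in> space M \<Longrightarrow> 0 \<le> \<gamma> t \<omega>"
    and \<gamma>_path_integrable: "AE \<omega> in M. set_integrable lborel {0..T} (\<lambda>s. \<gamma> s \<omega>)"
    and \<gamma>_exp_integrable: "integrable M (\<lambda>\<omega>. exp (LINT s:{0..T}|lborel. \<gamma> s \<omega>))"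
begin

definition horizon_time :: "('a \<Rightarrow> real) \<Rightarrow> bool" where
  "horizon_time \<rho> \<longleftrightarrow> stopping_time F \<rho> \<and> (AE \<omega> in M. 0 \<le> \<rho> \<omega> \<and> \<rho> \<omega> \<le> T)"

definition dominated :: "(real \<Rightarrow> 'a \<Rightarrow> real) \<Rightarrow> bool" where
  "dominated k \<longleftrightarrow> progressive F T k \<and> (AE \<omega> in M. \<forall>t\<in>{0..T}. \<bar>k t \<omega>\<bar> \<le> \<gamma> t \<omega>)"

definition envelope :: "('a \<Rightarrow> real) \<Rightarrow> 'a \<Rightarrow> real" where
  "envelope \<rho> = cexp_st M F \<rho> (\<lambda>\<omega>. exp (pathwise_integral \<gamma> \<rho> (\<lambda>_. T) \<omega>))"

lemma horizon_time_const: "0 \<le> t \<Longrightarrow> t \<le> T \<Longrightarrow> horizon_time (\<lambda>_. t)"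
  by (simp add: horizon_time_def stopping_time_const)

lemma horizon_time_from:
  assumes "horizon_time \<rho>" "\<nu> \<in> stopping_times_from M F T \<rho>"
  shows "horizon_time \<nu>" and "AE \<omega> in M. 0 \<le> \<rho> \<omega> \<and> \<rho> \<omega> \<le> \<nu> \<omega> \<and> \<nu> \<omega> \<le> T"
proof -
  show order: "AE \<omega> in M. 0 \<le> \<rho> \<omega> \<and> \<rho> \<omega> \<le> \<nu> \<omega> \<and> \<nu> \<omega> \<le> T"
    using assms unfolding horizon_time_def stopping_times_from_def by (auto elim: AE_mp)
  show "horizon_time \<nu>"
    using assms(2) order unfolding horizon_time_def stopping_times_from_def by (auto elim: AE_mp)
qed

lemma T_in_stopping_times_from: "horizon_time \<rho> \<Longrightarrow> (\<lambda>_. T) \<in> stopping_times_from M F T \<rho>"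
  by (auto simp: stopping_times_from_def horizon_time_def stopping_time_const elim: AE_mp)

lemma dominated_gamma: "dominated \<gamma>"
  unfolding dominated_def using \<gamma>_progressive \<gamma>_nonneg AE_space by (auto elim!: eventually_mono)

lemma AE_dominated_path:
  assumes "dominated k"
  shows "AE \<omega> in M. set_integrable lborel {0..T} (\<lambda>s. \<gamma> s \<omega>) \<and>
    set_integrable lborel {0..T} (\<lambda>s. k s \<omega>) \<and> (\<forall>s\<in>{0..T}. \<bar>k s \<omega>\<bar> \<le> \<gamma> s \<omega>)"
proof -
  have "progressive F T k" and bound: "AE \<omega> in M. \<forall>t\<in>{0..T}. \<bar>k t \<omega>\<bar> \<le> \<gamma> t \<omega>"
    using assms by (simp_all add: dominated_def)
  from \<gamma>_path_integrable AE_space bound show ?thesis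
  proof eventually_elim
    case (elim \<omega>)
    have "set_integrable lborel {0..T} (\<lambda>s. k s \<omega>)"
    proof (rule set_integrable_bound[OF elim(1)])
      show "set_borel_measurable lborel {0..T} (\<lambda>s. k s \<omega>)"
        using elim by (intro set_borel_measurable_progressive_path[OF \<open>progressive F T k\<close> T_nonneg]) auto
      show "AE s in lborel. s \<in> {0..T} \<longrightarrow> norm (k s \<omega>) \<le> norm (\<gamma> s \<omega>)"
        using elim \<gamma>_nonneg by (intro AE_I2) force
    qed
    with elim show ?case by blast
  qed
qed

lemma AE_pathwise_integral_append:
  assumes "dominated k"
  shows "AE \<omega> in M. 0 \<le> \<rho> \<omega> \<longrightarrow> \<rho> \<omega> \<le> \<nu> \<omega> \<longrightarrow> \<nu> \<omega> \<le> \<mu> \<omega> \<longrightarrow> \<mu> \<omega> \<le> T \<longrightarrow>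
    pathwise_integral k \<rho> \<nu> \<omega> + pathwise_integral k \<nu> \<mu> \<omega> = pathwise_integral k \<rho> \<mu> \<omega>"
  using AE_dominated_path[OF assms]
proof eventually_elim
  case (elim \<omega>)
  show ?case
  proof (intro impI)
    assume "0 \<le> \<rho> \<omega>" "\<rho> \<omega> \<le> \<nu> \<omega>" "\<nu> \<omega> \<le> \<mu> \<omega>" "\<mu> \<omega> \<le> T"
    moreover have "set_integrable lborel {\<rho> \<omega>..\<mu> \<omega>} (\<lambda>s. k s \<omega>)"
      by (rule set_integrable_subset[of _ "{0..T}"]) (use elim calculation in auto)
    ultimately show "pathwise_integral k \<rho> \<nu> \<omega> + pathwise_integral k \<nu> \<mu> \<omega> = pathwise_integral k \<rho> \<mu> \<omega>"
      unfolding pathwise_integral_def by (blast intro: set_integral_Icc_append)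
  qed
qed

lemma pathwise_integral_gamma_nonneg:
  assumes "\<omega> \<in> space M" "0 \<le> \<rho> \<omega>" "\<nu> \<omega> \<le> T"
  shows "0 \<le> pathwise_integral \<gamma> \<rho> \<nu> \<omega>"
  unfolding pathwise_integral_def set_lebesgue_integral_def
  using assms \<gamma>_nonneg by (intro Bochner_Integration.integral_nonneg) (auto simp: indicator_def)

lemma AE_abs_pathwise_integral_le:
  assumes "dominated k"
  shows "AE \<omega> in M. 0 \<le> \<rho> \<omega> \<longrightarrow> \<nu> \<omega> \<le> T \<longrightarrow>
    \<bar>pathwise_integral k \<rho> \<nu> \<omega>\<bar> \<le> pathwise_integral \<gamma> \<rho> \<nu> \<omega> \<and>
    pathwise_integral \<gamma> \<rho> \<nu> \<omega> \<le> (LINT s:{0..T}|lborel. \<gamma> s \<omega>)"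
  using AE_dominated_path[OF assms] AE_space
proof eventually_elim
  case (elim \<omega>)
  show ?case
  proof (intro impI conjI)
    assume "0 \<le> \<rho> \<omega>" "\<nu> \<omega> \<le> T"
    then have sub: "{\<rho> \<omega>..\<nu> \<omega>} \<subseteq> {0..T}" by auto
    then have "set_integrable lborel {\<rho> \<omega>..\<nu> \<omega>} (\<lambda>s. k s \<omega>)"
      "set_integrable lborel {\<rho> \<omega>..\<nu> \<omega>} (\<lambda>s. \<gamma> s \<omega>)"
      using elim by (auto intro: set_integrable_subset)
    then show "\<bar>pathwise_integral k \<rho> \<nu> \<omega>\<bar> \<le> pathwise_integral \<gamma> \<rho> \<nu> \<omega>"
      unfolding pathwise_integral_def using elim sub by (intro abs_set_integral_le) auto
    show "pathwise_integral \<gamma> \<rho> \<nu> \<omega> \<le> (LINT s:{0..T}|lborel. \<gamma> s \<omega>)"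
      unfolding pathwise_integral_def set_lebesgue_integral_def
    proof (rule integral_mono)
      show "integrable lborel (\<lambda>s. indicator {\<rho> \<omega>..\<nu> \<omega>} s *\<^sub>R \<gamma> s \<omega>)"
        using \<open>set_integrable lborel {\<rho> \<omega>..\<nu> \<omega>} (\<lambda>s. \<gamma> s \<omega>)\<close> by (simp add: set_integrable_def)
      show "integrable lborel (\<lambda>s. indicator {0..T} s *\<^sub>R \<gamma> s \<omega>)"
        using elim by (simp add: set_integrable_def)
      show "indicator {\<rho> \<omega>..\<nu> \<omega>} s *\<^sub>R \<gamma> s \<omega> \<le> indicator {0..T} s *\<^sub>R \<gamma> s \<omega>" for s
        using sub \<gamma>_nonneg[of s \<omega>] elim by (auto simp: indicator_def)
    qed
  qed
qed

lemma borel_measurable_pathwise_integral: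
  assumes "dominated k" "stopping_time F \<rho>" "stopping_time F \<nu>"
    and "AE \<omega> in M. 0 \<le> \<rho> \<omega> \<and> \<rho> \<omega> \<le> \<nu> \<omega> \<and> \<nu> \<omega> \<le> T"
  shows "pathwise_integral k \<rho> \<nu> \<in> borel_measurable M"
  using assms borel_measurable_pre_sigma_pathwise_integral borel_measurable_pre_sigmaD
  unfolding dominated_def by blast

lemma integrable_exp_pathwise_integral:
  assumes k: "dominated k" and \<rho>: "stopping_time F \<rho>" and \<nu>: "stopping_time F \<nu>"
    and order: "AE \<omega> in M. 0 \<le> \<rho> \<omega> \<and> \<rho> \<omega> \<le> \<nu> \<omega> \<and> \<nu> \<omega> \<le> T"
  shows "integrable M (\<lambda>\<omega>. exp (pathwise_integral k \<rho> \<nu> \<omega>))"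
proof (rule Bochner_Integration.integrable_bound[OF \<gamma>_exp_integrable])
  show "(\<lambda>\<omega>. exp (pathwise_integral k \<rho> \<nu> \<omega>)) \<in> borel_measurable M"
    using borel_measurable_pathwise_integral[OF assms] by measurable
  show "AE \<omega> in M. norm (exp (pathwise_integral k \<rho> \<nu> \<omega>)) \<le> norm (exp (LINT s:{0..T}|lborel. \<gamma> s \<omega>))"
    using AE_abs_pathwise_integral_le[OF k, of \<rho> \<nu>] order by eventually_elim auto
qed

lemma horizon_time_to_T:
  "horizon_time \<rho> \<Longrightarrow> AE \<omega> in M. 0 \<le> \<rho> \<omega> \<and> \<rho> \<omega> \<le> T \<and> T \<le> T"
  unfolding horizon_time_def by (auto elim: eventually_mono)

lemma integrable_exp_pathwise_integral_to_T:
  "dominated k \<Longrightarrow> horizon_time \<rho> \<Longrightarrow> integrable M (\<lambda>\<omega>. exp (pathwise_integral k \<rho> (\<lambda>_. T) \<omega>))"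
  using integrable_exp_pathwise_integral[OF _ _ stopping_time_const horizon_time_to_T]
  by (simp add: horizon_time_def)

lemma borel_measurable_pathwise_integral_to_T:
  "dominated k \<Longrightarrow> horizon_time \<rho> \<Longrightarrow> pathwise_integral k \<rho> (\<lambda>_. T) \<in> borel_measurable M"
  using borel_measurable_pathwise_integral[OF _ _ stopping_time_const horizon_time_to_T]
  by (simp add: horizon_time_def)

lemma cexp_st_exp_pathwise_integral_tower:
  assumes k: "dominated k" and \<rho>: "stopping_time F \<rho>" and \<nu>: "stopping_time F \<nu>"
    and order: "AE \<omega> in M. 0 \<le> \<rho> \<omega> \<and> \<rho> \<omega> \<le> \<nu> \<omega> \<and> \<nu> \<omega> \<le> T"
  defines "Z \<equiv> \<lambda>\<omega>. exp (pathwise_integral k \<rho> \<nu> \<omega>) *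
    cexp_st M F \<nu> (\<lambda>\<omega>. exp (pathwise_integral k \<nu> (\<lambda>_. T) \<omega>)) \<omega>"
  shows "integrable M Z"
    and "AE \<omega> in M. cexp_st M F \<rho> Z \<omega> = cexp_st M F \<rho> (\<lambda>\<omega>. exp (pathwise_integral k \<rho> (\<lambda>_. T) \<omega>)) \<omega>"
proof -
  define f where "f = (\<lambda>\<omega>. exp (pathwise_integral k \<rho> \<nu> \<omega>))"
  define g where "g = (\<lambda>\<omega>. exp (pathwise_integral k \<nu> (\<lambda>_. T) \<omega>))"
  define h where "h = (\<lambda>\<omega>. exp (pathwise_integral k \<rho> (\<lambda>_. T) \<omega>))"
  have \<nu>_time: "horizon_time \<nu>" and \<rho>_time: "horizon_time \<rho>"
    using \<rho> \<nu> order by (auto simp: horizon_time_def elim: eventually_mono)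
  have "pathwise_integral k \<rho> \<nu> \<in> borel_measurable (pre_sigma \<nu>)"
    using k unfolding dominated_def by (intro borel_measurable_pre_sigma_pathwise_integral[OF _ \<rho> \<nu> order]) simp
  then have f_pre: "f \<in> borel_measurable (pre_sigma \<nu>)"
    unfolding f_def by (rule measurable_compose[OF _ borel_measurable_exp])
  have [measurable]: "f \<in> borel_measurable M" and g_meas[measurable]: "g \<in> borel_measurable M"
    and [measurable]: "h \<in> borel_measurable M"
    using borel_measurable_pre_sigmaD[OF \<nu> f_pre] borel_measurable_pathwise_integral_to_T[OF k \<nu>_time]
      borel_measurable_pathwise_integral_to_T[OF k \<rho>_time]
    by (simp_all add: g_def h_def)
  have fg: "AE \<omega> in M. h \<omega> = f \<omega> * g \<omega>"
    using AE_pathwise_integral_append[OF k, of \<rho> \<nu> "\<lambda>_. T"] order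
    by eventually_elim (simp add: f_def g_def h_def flip: exp_add)
  have fg_int: "integrable M (\<lambda>\<omega>. f \<omega> * g \<omega>)"
    by (rule integrable_cong_AE_imp[OF _ _ fg])
      (simp_all add: h_def integrable_exp_pathwise_integral_to_T[OF k \<rho>_time])
  have "AE \<omega> in M. \<rho> \<omega> \<le> \<nu> \<omega>" using order by eventually_elim simp
  note tower = cexp_st_tower_mult[OF \<rho> \<nu> this f_pre g_meas fg_int]
  show "integrable M Z" using tower(1) by (simp add: Z_def f_def g_def)
  have "AE \<omega> in M. cexp_st M F \<rho> h \<omega> = cexp_st M F \<rho> (\<lambda>\<omega>. f \<omega> * g \<omega>) \<omega>"
    by (rule cexp_st_cong[OF \<rho> fg]) measurable
  with tower(2) show "AE \<omega> in M. cexp_st M F \<rho> Z \<omega> = cexp_st M F \<rho> (\<lambda>\<omega>. exp (pathwise_integral k \<rho> (\<lambda>_. T) \<omega>)) \<omega>"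
    by eventually_elim (simp add: Z_def f_def g_def h_def)
qed

lemma envelope_nonneg: "horizon_time \<rho> \<Longrightarrow> AE \<omega> in M. 0 \<le> envelope \<rho> \<omega>"
  unfolding envelope_def using borel_measurable_pathwise_integral_to_T[OF dominated_gamma]
  by (intro cexp_st_nonneg) (auto simp: horizon_time_def)

lemma envelope_tower:
  assumes "horizon_time \<rho>" "\<nu> \<in> stopping_times_from M F T \<rho>"
  shows "integrable M (\<lambda>\<omega>. exp (pathwise_integral \<gamma> \<rho> \<nu> \<omega>) * envelope \<nu> \<omega>)"
    and "AE \<omega> in M. cexp_st M F \<rho> (\<lambda>\<omega>. exp (pathwise_integral \<gamma> \<rho> \<nu> \<omega>) * envelope \<nu> \<omega>) \<omega> = envelope \<rho> \<omega>"
  using cexp_st_exp_pathwise_integral_tower[OF dominated_gamma _ _ horizon_time_from(2)[OF assms]]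
    assms horizon_time_from(1)[OF assms]
  unfolding envelope_def horizon_time_def by auto

lemma envelope_le_cexp_from_earlier:
  assumes \<tau>: "stopping_time F \<tau>" "\<forall>\<omega>\<in>space M. 0 \<le> \<tau> \<omega> \<and> \<tau> \<omega> \<le> T" and t: "0 \<le> t" "t \<le> T"
  shows "AE \<omega> in M. \<tau> \<omega> \<le> t \<longrightarrow>
    envelope (\<lambda>_. t) \<omega> \<le> real_cond_exp M (F t) (\<lambda>\<omega>. exp (pathwise_integral \<gamma> \<tau> (\<lambda>_. T) \<omega>)) \<omega>"
proof -
  have t_time: "horizon_time (\<lambda>_. t)" by (rule horizon_time_const[OF t])
  have "AE \<omega> in M. 0 \<le> \<tau> \<omega> \<and> \<tau> \<omega> \<le> T" using \<tau>(2) by (intro AE_I2) blast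
  then have \<tau>_time: "horizon_time \<tau>" using \<tau>(1) by (simp add: horizon_time_def)
  have "Measurable.pred (F t) (\<lambda>\<omega>. \<tau> \<omega> \<le> t)" by (rule stopping_timeD[OF \<tau>(1)])
  then have pred: "Measurable.pred (pre_sigma (\<lambda>_. t)) (\<lambda>\<omega>. \<tau> \<omega> \<le> t)"
    by (simp add: pred_def space_pre_sigma F_space sets_pre_sigma_const)
  \<comment> \<open>Starting the integral at tau instead of t only adds the nonnegative part over [tau, t].\<close>
  have "AE \<omega> in M. \<tau> \<omega> \<le> t \<longrightarrow>
      exp (pathwise_integral \<gamma> (\<lambda>_. t) (\<lambda>_. T) \<omega>) \<le> exp (pathwise_integral \<gamma> \<tau> (\<lambda>_. T) \<omega>)"
    using AE_pathwise_integral_append[OF dominated_gamma, of \<tau> "\<lambda>_. t" "\<lambda>_. T"] AE_space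
  proof eventually_elim
    case (elim \<omega>)
    then show ?case
      using pathwise_integral_gamma_nonneg[of \<omega> \<tau> "\<lambda>_. t"] \<tau>(2) t by auto
  qed
  from cexp_st_mono_on_event[OF stopping_time_const pred
      integrable_exp_pathwise_integral_to_T[OF dominated_gamma t_time]
      integrable_exp_pathwise_integral_to_T[OF dominated_gamma \<tau>_time] this]
  show ?thesis by (simp add: envelope_def cexp_st_const_time)
qed

end

section \<open>The switching scheme\<close>

lemma Max_exp_mult_bounds:
  fixes \<psi> z :: "'b \<Rightarrow> real"
  assumes "finite U" "U \<noteq> {}" and bounds: "\<forall>\<beta>\<in>U. 0 \<le> \<psi> \<beta> \<and> 0 \<le> z \<beta> \<and> z \<beta> \<le> e" and "a \<le> c"
  shows "0 \<le> Max ((\<lambda>\<beta>. exp (a - \<psi> \<beta>) * z \<beta>) ` U) \<and> Max ((\<lambda>\<beta>. exp (a - \<psi> \<beta>) * z \<beta>) ` U) \<le> exp c * e"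
proof
  obtain \<beta>0 where "\<beta>0 \<in> U" using assms(2) by blast
  then have "0 \<le> exp (a - \<psi> \<beta>0) * z \<beta>0" using bounds by simp
  also have "\<dots> \<le> Max ((\<lambda>\<beta>. exp (a - \<psi> \<beta>) * z \<beta>) ` U)" using assms(1) \<open>\<beta>0 \<in> U\<close> by (intro Max_ge) auto
  finally show "0 \<le> Max ((\<lambda>\<beta>. exp (a - \<psi> \<beta>) * z \<beta>) ` U)" .
  have "exp (a - \<psi> \<beta>) * z \<beta> \<le> exp c * e" if "\<beta> \<in> U" for \<beta>
    using bounds that \<open>a \<le> c\<close> by (intro mult_mono) auto
  then show "Max ((\<lambda>\<beta>. exp (a - \<psi> \<beta>) * z \<beta>) ` U) \<le> exp c * e"
    using assms(1,2) by (subst Max_le_iff) auto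
qed

lemma finite_Vset: "finite U \<Longrightarrow> finite (Vset U T \<Delta>)"
proof -
  assume "finite U"
  have "Usums U k = sum_list ` {as. set as \<subseteq> U \<and> length as = k}" for k
    by (auto simp: Usums_def)
  then have "finite (Usums U k)" for k using finite_lists_length_eq[OF \<open>finite U\<close>] by simp
  then show ?thesis unfolding Vset_def by auto
qed

lemma at_rv_eq:
  assumes "finite V" "\<xi> \<omega> \<in> V"
  shows "at_rv V Z \<xi> \<omega> = Z (\<xi> \<omega>) \<omega>"
proof -
  have "at_rv V Z \<xi> \<omega> = (\<Sum>a\<in>V. if \<xi> \<omega> = a then Z a \<omega> else 0)"
    unfolding at_rv_def by (intro sum.cong) (auto simp: indicator_def)
  also have "\<dots> = Z (\<xi> \<omega>) \<omega>" using assms by (simp add: sum.delta)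
  finally show ?thesis .
qed

lemma AE_at_random_index:
  assumes "finite V" "\<xi> \<in> space M \<rightarrow> V" "\<And>a. a \<in> V \<Longrightarrow> AE \<omega> in M. P a \<omega>"
  shows "AE \<omega> in M. P (\<xi> \<omega>) \<omega>"
proof -
  have "AE \<omega> in M. \<forall>a\<in>V. P a \<omega>" using assms(1,3) by (rule AE_finite_allI)
  with AE_space show ?thesis by eventually_elim (use assms(2) in blast)
qed

locale switching_scheme = dominating_rate M F T \<gamma> for M :: "'a measure" and F T \<gamma> +
  fixes X :: "real \<Rightarrow> 'a \<Rightarrow> real^'l" and \<Delta> :: real and U :: "(real^'l) set"
    and \<psi> :: "real^'l \<Rightarrow> real" and g :: "real \<Rightarrow> 'a \<Rightarrow> real^'l \<Rightarrow> real"
  assumes \<Delta>_pos: "0 < \<Delta>" and U_finite: "finite U" and U_nonempty: "U \<noteq> {}"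
    and \<psi>_nonneg: "\<And>x. 0 \<le> \<psi> x"
    and X_progressive: "progressive F T X"
    and g_progressive: "progressive_param F T g"
    and g_bounded: "AE \<omega> in M. \<forall>t\<in>{0..T}. \<forall>x. \<bar>g t \<omega> x\<bar> \<le> \<gamma> t \<omega>"
begin

abbreviation Y :: "nat \<Rightarrow> ('a \<Rightarrow> real) \<Rightarrow> real^'l \<Rightarrow> 'a \<Rightarrow> real" where
  "Y \<equiv> Ysch M F T X \<Delta> U \<psi> g"

abbreviation obstacle :: "(('a \<Rightarrow> real) \<Rightarrow> real^'l \<Rightarrow> 'a \<Rightarrow> real) \<Rightarrow> ('a \<Rightarrow> real) \<Rightarrow> real^'l \<Rightarrow> 'a \<Rightarrow> real" where
  "obstacle \<equiv> O_step M F T X \<Delta> U \<psi> g"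

definition driver :: "real^'l \<Rightarrow> real \<Rightarrow> 'a \<Rightarrow> real" where
  "driver b s \<omega> = g s \<omega> (X s \<omega> + b)"

lemma Igr_eq_pathwise_integral: "Igr g X b = pathwise_integral (driver b)"
  by (simp add: fun_eq_iff Igr_def pathwise_integral_def driver_def)

lemma dominated_driver: "dominated (driver b)"
proof -
  have "progressive F T (driver b)"
    unfolding progressive_def
  proof
    fix t assume "t \<in> {0..T}"
    let ?N = "restrict_space borel {0..t} \<Otimes>\<^sub>M F t"
    have "(\<lambda>(s, \<omega>). X s \<omega>) \<in> borel_measurable ?N"
      using X_progressive \<open>t \<in> {0..T}\<close> unfolding progressive_def by auto
    then have "(\<lambda>p. X (fst p) (snd p) + b) \<in> borel_measurable ?N"
      unfolding case_prod_beta by (intro borel_measurable_add) auto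
    then have "(\<lambda>p. (p, X (fst p) (snd p) + b)) \<in> ?N \<rightarrow>\<^sub>M ?N \<Otimes>\<^sub>M borel"
      by (intro measurable_Pair measurable_ident_sets[OF refl])
    moreover have "(\<lambda>((s, \<omega>), x). g s \<omega> x) \<in> borel_measurable (?N \<Otimes>\<^sub>M borel)"
      using g_progressive \<open>t \<in> {0..T}\<close> unfolding progressive_param_def by auto
    ultimately have "(\<lambda>p. (\<lambda>((s, \<omega>), x). g s \<omega> x) (p, X (fst p) (snd p) + b)) \<in> borel_measurable ?N"
      by (rule measurable_compose)
    then show "(\<lambda>(s, \<omega>). driver b s \<omega>) \<in> borel_measurable ?N"
      by (simp add: driver_def case_prod_beta)
  qed
  moreover have "AE \<omega> in M. \<forall>t\<in>{0..T}. \<bar>driver b t \<omega>\<bar> \<le> \<gamma> t \<omega>"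
    using g_bounded by eventually_elim (simp add: driver_def)
  ultimately show ?thesis by (simp add: dominated_def)
qed

lemma Ysch_0: "Y 0 \<rho> b = cexp_st M F \<rho> (\<lambda>\<omega>. exp (pathwise_integral (driver b) \<rho> (\<lambda>_. T) \<omega>))"
  by (simp add: Igr_eq_pathwise_integral)

definition enveloped :: "(('a \<Rightarrow> real) \<Rightarrow> real^'l \<Rightarrow> 'a \<Rightarrow> real) \<Rightarrow> bool" where
  "enveloped Z \<longleftrightarrow> (\<forall>\<rho> b. horizon_time \<rho> \<longrightarrow>
     Z \<rho> b \<in> borel_measurable M \<and> (AE \<omega> in M. 0 \<le> Z \<rho> b \<omega> \<and> Z \<rho> b \<omega> \<le> envelope \<rho> \<omega>))"

lemma envelopedD:
  assumes "enveloped Z" "horizon_time \<rho>"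
  shows "Z \<rho> b \<in> borel_measurable M" "AE \<omega> in M. 0 \<le> Z \<rho> b \<omega> \<and> Z \<rho> b \<omega> \<le> envelope \<rho> \<omega>"
  using assms by (auto simp: enveloped_def)

lemma enveloped_Ysch_0: "enveloped (Y 0)"
  unfolding enveloped_def
proof (intro allI impI conjI)
  fix \<rho> b assume \<rho>: "horizon_time \<rho>"
  have st: "stopping_time F \<rho>" using \<rho> by (simp add: horizon_time_def)
  have [measurable]: "pathwise_integral (driver b) \<rho> (\<lambda>_. T) \<in> borel_measurable M"
    "pathwise_integral \<gamma> \<rho> (\<lambda>_. T) \<in> borel_measurable M"
    by (rule borel_measurable_pathwise_integral_to_T[OF dominated_driver \<rho>]
        borel_measurable_pathwise_integral_to_T[OF dominated_gamma \<rho>])+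
  show "Y 0 \<rho> b \<in> borel_measurable M" by (simp only: Ysch_0 borel_measurable_cexp_st)
  have "AE \<omega> in M. 0 \<le> Y 0 \<rho> b \<omega>"
    unfolding Ysch_0 by (rule cexp_st_nonneg[OF st]) auto
  moreover have "AE \<omega> in M. exp (pathwise_integral (driver b) \<rho> (\<lambda>_. T) \<omega>) \<le>
      exp (pathwise_integral \<gamma> \<rho> (\<lambda>_. T) \<omega>)"
    using AE_abs_pathwise_integral_le[OF dominated_driver, of \<rho> "\<lambda>_. T" b] horizon_time_to_T[OF \<rho>]
    by eventually_elim auto
  then have "AE \<omega> in M. Y 0 \<rho> b \<omega> \<le> envelope \<rho> \<omega>"
    unfolding Ysch_0 envelope_def
    by (rule cexp_st_mono[OF st _ integrable_exp_pathwise_integral_to_T[OF dominated_driver \<rho>]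
          integrable_exp_pathwise_integral_to_T[OF dominated_gamma \<rho>]])
  ultimately show "AE \<omega> in M. 0 \<le> Y 0 \<rho> b \<omega> \<and> Y 0 \<rho> b \<omega> \<le> envelope \<rho> \<omega>"
    by eventually_elim simp
qed

definition delayed :: "('a \<Rightarrow> real) \<Rightarrow> 'a \<Rightarrow> real" where
  "delayed \<nu> \<omega> = min (\<nu> \<omega> + \<Delta>) T"

lemma delayed_in_stopping_times_from:
  assumes \<nu>: "horizon_time \<nu>"
  shows "delayed \<nu> \<in> stopping_times_from M F T \<nu>"
proof -
  have "stopping_time F (delayed \<nu>)"
    unfolding delayed_def[abs_def] using \<nu> \<Delta>_pos
    by (intro stopping_time_min stopping_time_add_const stopping_time_const) (auto simp: horizon_time_def)
  moreover have "AE \<omega> in M. \<nu> \<omega> \<le> delayed \<nu> \<omega> \<and> delayed \<nu> \<omega> \<le> T"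
    using \<nu> \<Delta>_pos unfolding horizon_time_def by (auto simp: delayed_def elim!: eventually_mono)
  ultimately show ?thesis by (simp add: stopping_times_from_def)
qed

definition continuation ::
  "(('a \<Rightarrow> real) \<Rightarrow> real^'l \<Rightarrow> 'a \<Rightarrow> real) \<Rightarrow> ('a \<Rightarrow> real) \<Rightarrow> real^'l \<Rightarrow> 'a \<Rightarrow> real" where
  "continuation Z \<nu> b \<omega> = indicator {\<omega>. \<nu> \<omega> < T - \<Delta>} \<omega> *
     Max ((\<lambda>\<beta>. exp (Igr g X b \<nu> (delayed \<nu>) \<omega> - \<psi> \<beta>) * Z (delayed \<nu>) (b + \<beta>) \<omega>) ` U)"

lemma O_step_eq_continuation:
  "obstacle Z \<nu> b = (\<lambda>\<omega>. cexp_st M F \<nu> (continuation Z \<nu> b) \<omega> +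
     indicator {\<omega>. T - \<Delta> \<le> \<nu> \<omega> \<and> \<nu> \<omega> \<le> T} \<omega> * Y 0 \<nu> b \<omega>)"
proof -
  have "(\<lambda>\<omega>. indicator {\<omega>. \<nu> \<omega> < T - \<Delta>} \<omega> *
      Max ((\<lambda>\<beta>. exp (Igr g X b \<nu> (\<lambda>\<omega>. \<nu> \<omega> + \<Delta>) \<omega> - \<psi> \<beta>) * Z (delayed \<nu>) (b + \<beta>) \<omega>) ` U))
    = continuation Z \<nu> b"
  proof
    fix \<omega>
    \<comment> \<open>The indicator vanishes unless nu + Delta < T, where the two integration bounds agree.\<close>
    show "indicator {\<omega>. \<nu> \<omega> < T - \<Delta>} \<omega> *
        Max ((\<lambda>\<beta>. exp (Igr g X b \<nu> (\<lambda>\<omega>. \<nu> \<omega> + \<Delta>) \<omega> - \<psi> \<beta>) * Z (delayed \<nu>) (b + \<beta>) \<omega>) ` U)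
      = continuation Z \<nu> b \<omega>"
      by (cases "\<nu> \<omega> < T - \<Delta>") (simp_all add: continuation_def Igr_def delayed_def)
  qed
  then show ?thesis by (simp add: O_step_def delayed_def[abs_def])
qed

lemma continuation_bounds:
  assumes Z: "enveloped Z" and \<nu>: "horizon_time \<nu>"
  defines "W \<equiv> \<lambda>\<omega>. indicator {\<omega>. \<nu> \<omega> < T - \<Delta>} \<omega> *
    (exp (pathwise_integral \<gamma> \<nu> (delayed \<nu>) \<omega>) * envelope (delayed \<nu>) \<omega>)"
  shows "continuation Z \<nu> b \<in> borel_measurable M"
    and "AE \<omega> in M. 0 \<le> continuation Z \<nu> b \<omega> \<and> continuation Z \<nu> b \<omega> \<le> W \<omega>"
proof -
  let ?\<nu>' = "delayed \<nu>"
  have \<nu>'_from: "?\<nu>' \<in> stopping_times_from M F T \<nu>" by (rule delayed_in_stopping_times_from[OF \<nu>])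
  have \<nu>': "horizon_time ?\<nu>'" and order: "AE \<omega> in M. 0 \<le> \<nu> \<omega> \<and> \<nu> \<omega> \<le> ?\<nu>' \<omega> \<and> ?\<nu>' \<omega> \<le> T"
    using horizon_time_from[OF \<nu> \<nu>'_from] by auto
  have [measurable]: "pathwise_integral (driver b) \<nu> ?\<nu>' \<in> borel_measurable M"
    "\<nu> \<in> borel_measurable M" "Z ?\<nu>' (b + \<beta>) \<in> borel_measurable M" for \<beta>
    using \<nu> \<nu>' order envelopedD(1)[OF Z \<nu>']
    by (auto simp: horizon_time_def intro: borel_measurable_pathwise_integral[OF dominated_driver]
        stopping_time_measurable)
  have "(\<lambda>\<omega>. Max ((\<lambda>\<beta>. exp (Igr g X b \<nu> ?\<nu>' \<omega> - \<psi> \<beta>) * Z ?\<nu>' (b + \<beta>) \<omega>) ` U))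
    \<in> borel_measurable M"
    unfolding Igr_eq_pathwise_integral by (rule borel_measurable_Max[OF U_finite]) measurable
  then show "continuation Z \<nu> b \<in> borel_measurable M"
    unfolding continuation_def[abs_def] indicator_def by measurable
  have "AE \<omega> in M. \<forall>\<beta>\<in>U. 0 \<le> Z ?\<nu>' (b + \<beta>) \<omega> \<and> Z ?\<nu>' (b + \<beta>) \<omega> \<le> envelope ?\<nu>' \<omega>"
    using envelopedD(2)[OF Z \<nu>'] by (intro AE_finite_allI[OF U_finite]) simp
  with AE_abs_pathwise_integral_le[OF dominated_driver, of \<nu> ?\<nu>' b] order
  show "AE \<omega> in M. 0 \<le> continuation Z \<nu> b \<omega> \<and> continuation Z \<nu> b \<omega> \<le> W \<omega>"
  proof eventually_elim
    case (elim \<omega>)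
    then have "Igr g X b \<nu> ?\<nu>' \<omega> \<le> pathwise_integral \<gamma> \<nu> ?\<nu>' \<omega>"
      by (auto simp: Igr_eq_pathwise_integral abs_le_iff)
    then have "0 \<le> Max ((\<lambda>\<beta>. exp (Igr g X b \<nu> ?\<nu>' \<omega> - \<psi> \<beta>) * Z ?\<nu>' (b + \<beta>) \<omega>) ` U) \<and>
        Max ((\<lambda>\<beta>. exp (Igr g X b \<nu> ?\<nu>' \<omega> - \<psi> \<beta>) * Z ?\<nu>' (b + \<beta>) \<omega>) ` U)
          \<le> exp (pathwise_integral \<gamma> \<nu> ?\<nu>' \<omega>) * envelope ?\<nu>' \<omega>"
      using elim \<psi>_nonneg by (intro Max_exp_mult_bounds[OF U_finite U_nonempty]) auto
    then show ?case by (simp add: continuation_def W_def indicator_def)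
  qed
qed

lemma cexp_continuation_le:
  assumes Z: "enveloped Z" and \<nu>: "horizon_time \<nu>"
  shows "AE \<omega> in M. cexp_st M F \<nu> (continuation Z \<nu> b) \<omega> \<le> indicator {\<omega>. \<nu> \<omega> < T - \<Delta>} \<omega> * envelope \<nu> \<omega>"
proof -
  let ?\<nu>' = "delayed \<nu>" and ?I = "\<lambda>\<omega>. indicator {\<omega>. \<nu> \<omega> < T - \<Delta>} \<omega> :: real"
  define V where "V \<omega> = exp (pathwise_integral \<gamma> \<nu> ?\<nu>' \<omega>) * envelope ?\<nu>' \<omega>" for \<omega>
  have st: "stopping_time F \<nu>" using \<nu> by (simp add: horizon_time_def)
  note \<nu>'_from = delayed_in_stopping_times_from[OF \<nu>]
  have V_int: "integrable M V" and E_V: "AE \<omega> in M. cexp_st M F \<nu> V \<omega> = envelope \<nu> \<omega>"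
    using envelope_tower[OF \<nu> \<nu>'_from] by (simp_all add: V_def[abs_def])
  have I_pre: "?I \<in> borel_measurable (pre_sigma \<nu>)" by (rule borel_measurable_pre_sigma_indicator_less[OF st])
  have [measurable]: "?I \<in> borel_measurable M" "V \<in> borel_measurable M"
    by (rule borel_measurable_pre_sigmaD[OF st I_pre] borel_measurable_integrable[OF V_int])+
  have IV_int: "integrable M (\<lambda>\<omega>. ?I \<omega> * V \<omega>)"
  proof (rule Bochner_Integration.integrable_bound[OF V_int])
    show "(\<lambda>\<omega>. ?I \<omega> * V \<omega>) \<in> borel_measurable M" by measurable
  qed (auto simp: indicator_def)
  note bounds = continuation_bounds[OF Z \<nu>, of b, folded V_def]
  have [measurable]: "continuation Z \<nu> b \<in> borel_measurable M" by (rule bounds(1))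
  have "AE \<omega> in M. norm (continuation Z \<nu> b \<omega>) \<le> norm (?I \<omega> * V \<omega>)"
    using bounds(2) by eventually_elim auto
  then have "integrable M (continuation Z \<nu> b)"
    by (rule Bochner_Integration.integrable_bound[OF IV_int, rotated]) measurable
  moreover have "AE \<omega> in M. continuation Z \<nu> b \<omega> \<le> ?I \<omega> * V \<omega>"
    using bounds(2) by eventually_elim simp
  ultimately have "AE \<omega> in M. cexp_st M F \<nu> (continuation Z \<nu> b) \<omega> \<le> cexp_st M F \<nu> (\<lambda>\<omega>. ?I \<omega> * V \<omega>) \<omega>"
    by (intro cexp_st_mono[OF st _ _ IV_int])
  moreover have "AE \<omega> in M. cexp_st M F \<nu> (\<lambda>\<omega>. ?I \<omega> * V \<omega>) \<omega> = ?I \<omega> * cexp_st M F \<nu> V \<omega>"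
    by (rule cexp_st_mult_left[OF st I_pre _ IV_int]) measurable
  ultimately show ?thesis using E_V by eventually_elim simp
qed

lemma borel_measurable_obstacle:
  assumes "stopping_time F \<nu>"
  shows "obstacle Z \<nu> b \<in> borel_measurable M"
proof -
  have [measurable]: "\<nu> \<in> borel_measurable M" by (rule stopping_time_measurable[OF assms])
  show ?thesis unfolding O_step_eq_continuation Ysch_0 indicator_def by measurable
qed

lemma O_step_bounds:
  assumes Z: "enveloped Z" and \<nu>: "horizon_time \<nu>"
  shows "AE \<omega> in M. 0 \<le> obstacle Z \<nu> b \<omega> \<and> obstacle Z \<nu> b \<omega> \<le> envelope \<nu> \<omega>"
proof -
  have st: "stopping_time F \<nu>" using \<nu> by (simp add: horizon_time_def)
  have "AE \<omega> in M. 0 \<le> cexp_st M F \<nu> (continuation Z \<nu> b) \<omega>"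
    using continuation_bounds[OF Z \<nu>, of b] by (intro cexp_st_nonneg[OF st]) (auto elim: eventually_mono)
  moreover note cexp_continuation_le[OF Z \<nu>, of b] envelopedD(2)[OF enveloped_Ysch_0 \<nu>, of b]
    envelope_nonneg[OF \<nu>] horizon_time_to_T[OF \<nu>]
  ultimately show ?thesis
    unfolding O_step_eq_continuation by eventually_elim (auto simp: indicator_def)
qed

definition payoff ::
  "(('a \<Rightarrow> real) \<Rightarrow> real^'l \<Rightarrow> 'a \<Rightarrow> real) \<Rightarrow> ('a \<Rightarrow> real) \<Rightarrow> ('a \<Rightarrow> real) \<Rightarrow> real^'l \<Rightarrow> 'a \<Rightarrow> real" where
  "payoff Z \<rho> \<nu> b = cexp_st M F \<rho> (\<lambda>\<omega>. exp (Igr g X b \<rho> \<nu> \<omega>) * obstacle Z \<nu> b \<omega>)"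

lemma Ysch_Suc:
  "Y (Suc m) \<rho> b = ess_sup_family M {payoff (Y m) \<rho> \<nu> b | \<nu>. \<nu> \<in> stopping_times_from M F T \<rho>}"
  by (simp add: payoff_def)

lemma payoff_bounds:
  assumes Z: "enveloped Z" and \<rho>: "horizon_time \<rho>" and \<nu>_from: "\<nu> \<in> stopping_times_from M F T \<rho>"
  shows "AE \<omega> in M. 0 \<le> payoff Z \<rho> \<nu> b \<omega> \<and> payoff Z \<rho> \<nu> b \<omega> \<le> envelope \<rho> \<omega>"
proof -
  have \<nu>: "horizon_time \<nu>" and order: "AE \<omega> in M. 0 \<le> \<rho> \<omega> \<and> \<rho> \<omega> \<le> \<nu> \<omega> \<and> \<nu> \<omega> \<le> T"
    using horizon_time_from[OF \<rho> \<nu>_from] by auto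
  have st: "stopping_time F \<rho>" "stopping_time F \<nu>" using \<rho> \<nu> by (simp_all add: horizon_time_def)
  define P where "P \<omega> = exp (Igr g X b \<rho> \<nu> \<omega>) * obstacle Z \<nu> b \<omega>" for \<omega>
  define W where "W \<omega> = exp (pathwise_integral \<gamma> \<rho> \<nu> \<omega>) * envelope \<nu> \<omega>" for \<omega>
  have W_int: "integrable M W" and E_W: "AE \<omega> in M. cexp_st M F \<rho> W \<omega> = envelope \<rho> \<omega>"
    using envelope_tower[OF \<rho> \<nu>_from] by (simp_all add: W_def[abs_def])
  have [measurable]: "pathwise_integral (driver b) \<rho> \<nu> \<in> borel_measurable M"
    "obstacle Z \<nu> b \<in> borel_measurable M"
    by (rule borel_measurable_pathwise_integral[OF dominated_driver st order]
        borel_measurable_obstacle[OF st(2)])+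
  have [measurable]: "P \<in> borel_measurable M" "W \<in> borel_measurable M"
    unfolding P_def[abs_def] Igr_eq_pathwise_integral
    by (measurable, rule borel_measurable_integrable[OF W_int])
  have P_bounds: "AE \<omega> in M. 0 \<le> P \<omega> \<and> P \<omega> \<le> W \<omega>"
    using O_step_bounds[OF Z \<nu>, of b] AE_abs_pathwise_integral_le[OF dominated_driver, of \<rho> \<nu> b] order
  proof eventually_elim
    case (elim \<omega>)
    then have "exp (Igr g X b \<rho> \<nu> \<omega>) \<le> exp (pathwise_integral \<gamma> \<rho> \<nu> \<omega>)"
      by (auto simp: Igr_eq_pathwise_integral abs_le_iff)
    with elim show ?case unfolding P_def W_def by (auto intro: mult_mono)
  qed
  have "AE \<omega> in M. norm (P \<omega>) \<le> norm (W \<omega>)" using P_bounds by eventually_elim auto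
  then have P_int: "integrable M P"
    by (rule Bochner_Integration.integrable_bound[OF W_int, rotated]) measurable
  have "AE \<omega> in M. P \<omega> \<le> W \<omega>" using P_bounds by eventually_elim simp
  then have "AE \<omega> in M. cexp_st M F \<rho> P \<omega> \<le> cexp_st M F \<rho> W \<omega>"
    by (rule cexp_st_mono[OF st(1) _ P_int W_int])
  moreover have "AE \<omega> in M. 0 \<le> P \<omega>" using P_bounds by eventually_elim simp
  then have "AE \<omega> in M. 0 \<le> cexp_st M F \<rho> P \<omega>"
    by (rule cexp_st_nonneg[OF st(1)]) measurable
  ultimately have "AE \<omega> in M. 0 \<le> cexp_st M F \<rho> P \<omega> \<and> cexp_st M F \<rho> P \<omega> \<le> cexp_st M F \<rho> W \<omega>"
    by eventually_elim simp
  with E_W show ?thesis unfolding payoff_def P_def[symmetric] by eventually_elim simp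
qed

lemma O_step_late:
  assumes \<nu>: "horizon_time \<nu>" and late: "AE \<omega> in M. T - \<Delta> \<le> \<nu> \<omega>"
  shows "AE \<omega> in M. obstacle Z \<nu> b \<omega> = Y 0 \<nu> b \<omega>"
proof -
  have st: "stopping_time F \<nu>" using \<nu> by (simp add: horizon_time_def)
  have cont_0: "AE \<omega> in M. 0 = continuation Z \<nu> b \<omega>"
    using late by eventually_elim (simp add: continuation_def)
  \<comment> \<open>By completeness of M, the continuation is measurable because it vanishes almost surely.\<close>
  have "continuation Z \<nu> b \<in> borel_measurable M"
    by (rule borel_measurable_AE_cong_subalgebra[OF refl order_refl _ borel_measurable_const cont_0])
      (auto dest: null_setsD2)
  then have "AE \<omega> in M. cexp_st M F \<nu> (\<lambda>_. 0) \<omega> = cexp_st M F \<nu> (continuation Z \<nu> b) \<omega>"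
    by (rule cexp_st_cong[OF st cont_0 borel_measurable_const])
  moreover have "AE \<omega> in M. cexp_st M F \<nu> (\<lambda>_. 0) \<omega> = 0"
    using cexp_st_measurable_self[OF st, of "\<lambda>_. 0"] by simp
  ultimately show ?thesis
    using late horizon_time_to_T[OF \<nu>]
    unfolding O_step_eq_continuation by eventually_elim (simp add: indicator_def)
qed

lemma payoff_late:
  assumes \<rho>: "horizon_time \<rho>" and \<nu>_from: "\<nu> \<in> stopping_times_from M F T \<rho>"
    and late: "AE \<omega> in M. T - \<Delta> \<le> \<nu> \<omega>"
  shows "AE \<omega> in M. payoff Z \<rho> \<nu> b \<omega> = Y 0 \<rho> b \<omega>"
proof -
  have \<nu>: "horizon_time \<nu>" and order: "AE \<omega> in M. 0 \<le> \<rho> \<omega> \<and> \<rho> \<omega> \<le> \<nu> \<omega> \<and> \<nu> \<omega> \<le> T"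
    using horizon_time_from[OF \<rho> \<nu>_from] by auto
  have st: "stopping_time F \<rho>" "stopping_time F \<nu>" using \<rho> \<nu> by (simp_all add: horizon_time_def)
  have [measurable]: "pathwise_integral (driver b) \<rho> \<nu> \<in> borel_measurable M"
    "obstacle Z \<nu> b \<in> borel_measurable M"
    by (rule borel_measurable_pathwise_integral[OF dominated_driver st order]
        borel_measurable_obstacle[OF st(2)])+
  have "AE \<omega> in M. exp (Igr g X b \<rho> \<nu> \<omega>) * obstacle Z \<nu> b \<omega> = exp (Igr g X b \<rho> \<nu> \<omega>) * Y 0 \<nu> b \<omega>"
    using O_step_late[OF \<nu> late] by eventually_elim simp
  then have "AE \<omega> in M. payoff Z \<rho> \<nu> b \<omega> = cexp_st M F \<rho> (\<lambda>\<omega>. exp (Igr g X b \<rho> \<nu> \<omega>) * Y 0 \<nu> b \<omega>) \<omega>"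
    unfolding payoff_def Igr_eq_pathwise_integral
    by (rule cexp_st_cong[OF st(1)]) (measurable, simp only: Ysch_0 borel_measurable_cexp_st)
  with cexp_st_exp_pathwise_integral_tower(2)[OF dominated_driver st order, of b]
  show ?thesis unfolding Ysch_0 Igr_eq_pathwise_integral by eventually_elim simp
qed

lemma Ysch_Suc_bounds:
  assumes Z: "enveloped (Y m)" and \<rho>: "horizon_time \<rho>"
  shows "Y (Suc m) \<rho> b \<in> borel_measurable M"
    and "AE \<omega> in M. Y 0 \<rho> b \<omega> \<le> Y (Suc m) \<rho> b \<omega> \<and> Y (Suc m) \<rho> b \<omega> \<le> envelope \<rho> \<omega>"
proof -
  let ?Zs = "{payoff (Y m) \<rho> \<nu> b | \<nu>. \<nu> \<in> stopping_times_from M F T \<rho>}"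
  have T_from: "(\<lambda>_. T) \<in> stopping_times_from M F T \<rho>" by (rule T_in_stopping_times_from[OF \<rho>])
  have Zs_meas: "?Zs \<subseteq> borel_measurable M" by (auto simp: payoff_def)
  have Zs_nonempty: "?Zs \<noteq> {}" using T_from by blast
  have Zs_bounded: "AE \<omega> in M. P \<omega> \<le> envelope \<rho> \<omega>" if "P \<in> ?Zs" for P
    using that payoff_bounds[OF Z \<rho>] by (force elim: eventually_mono)
  have envelope_meas: "envelope \<rho> \<in> borel_measurable M" by (simp add: envelope_def)
  note ess_sup = ess_sup_family[OF Zs_meas Zs_nonempty envelope_meas Zs_bounded, folded Ysch_Suc]
  show "Y (Suc m) \<rho> b \<in> borel_measurable M" by (rule ess_sup(1))
  have "AE \<omega> in M. payoff (Y m) \<rho> (\<lambda>_. T) b \<omega> \<le> Y (Suc m) \<rho> b \<omega>"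
    using T_from by (intro ess_sup(2)) auto
  moreover have "AE \<omega> in M. Y (Suc m) \<rho> b \<omega> \<le> envelope \<rho> \<omega>"
    using ess_sup(3) envelope_meas Zs_bounded by blast
  moreover have "AE \<omega> in M. payoff (Y m) \<rho> (\<lambda>_. T) b \<omega> = Y 0 \<rho> b \<omega>"
    using \<Delta>_pos by (intro payoff_late[OF \<rho> T_from]) simp
  ultimately show "AE \<omega> in M. Y 0 \<rho> b \<omega> \<le> Y (Suc m) \<rho> b \<omega> \<and> Y (Suc m) \<rho> b \<omega> \<le> envelope \<rho> \<omega>"
    by eventually_elim simp
qed

lemma enveloped_Ysch: "enveloped (Y n)"
proof (induction n)
  case (Suc m)
  show ?case
    unfolding enveloped_def
  proof (intro allI impI conjI)
    fix \<rho> b assume \<rho>: "horizon_time \<rho>"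
    show "Y (Suc m) \<rho> b \<in> borel_measurable M" by (rule Ysch_Suc_bounds(1)[OF Suc \<rho>])
    show "AE \<omega> in M. 0 \<le> Y (Suc m) \<rho> b \<omega> \<and> Y (Suc m) \<rho> b \<omega> \<le> envelope \<rho> \<omega>"
      using Ysch_Suc_bounds(2)[OF Suc \<rho>, of b] envelopedD(2)[OF enveloped_Ysch_0 \<rho>, of b]
      by eventually_elim simp
  qed
qed (rule enveloped_Ysch_0)

lemma Ysch_0_le_Ysch:
  assumes "horizon_time \<rho>"
  shows "AE \<omega> in M. Y 0 \<rho> b \<omega> \<le> Y n \<rho> b \<omega>"
proof (cases n)
  case (Suc m)
  show ?thesis
    using Ysch_Suc_bounds(2)[OF enveloped_Ysch assms] unfolding Suc by (auto elim: eventually_mono)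
qed simp

lemma Ysch_Suc_late:
  assumes \<rho>: "horizon_time \<rho>" and late: "AE \<omega> in M. T - \<Delta> \<le> \<rho> \<omega>"
  shows "AE \<omega> in M. Y (Suc m) \<rho> b \<omega> = obstacle (Y m) \<rho> b \<omega>"
proof -
  let ?Zs = "{payoff (Y m) \<rho> \<nu> b | \<nu>. \<nu> \<in> stopping_times_from M F T \<rho>}"
  \<comment> \<open>After T - Delta no switch is possible, so every stopping rule yields the payoff of Y 0.\<close>
  have "AE \<omega> in M. P \<omega> \<le> Y 0 \<rho> b \<omega>" if "P \<in> ?Zs" for P
  proof -
    from that obtain \<nu> where P: "P = payoff (Y m) \<rho> \<nu> b" and \<nu>_from: "\<nu> \<in> stopping_times_from M F T \<rho>"
      by blast
    have "AE \<omega> in M. T - \<Delta> \<le> \<nu> \<omega>"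
      using late horizon_time_from(2)[OF \<rho> \<nu>_from] by eventually_elim simp
    from payoff_late[OF \<rho> \<nu>_from this, of "Y m" b] show ?thesis unfolding P by eventually_elim simp
  qed
  moreover have "Y 0 \<rho> b \<in> borel_measurable M" by (rule envelopedD(1)[OF enveloped_Ysch_0 \<rho>])
  moreover have "?Zs \<subseteq> borel_measurable M" by (auto simp: payoff_def)
  moreover have "?Zs \<noteq> {}" using T_in_stopping_times_from[OF \<rho>] by blast
  ultimately have "AE \<omega> in M. Y (Suc m) \<rho> b \<omega> \<le> Y 0 \<rho> b \<omega>"
    unfolding Ysch_Suc by (intro ess_sup_family(3)) blast+
  with Ysch_Suc_bounds(2)[OF enveloped_Ysch \<rho>, of b m] O_step_late[OF \<rho> late, of "Y m" b]
  show ?thesis by eventually_elim simp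
qed

lemma at_rv_Ysch_bounds:
  assumes V: "finite V" "\<xi> \<in> space M \<rightarrow> V"
    and \<tau>: "stopping_time F \<tau>" "\<forall>\<omega>\<in>space M. 0 \<le> \<tau> \<omega> \<and> \<tau> \<omega> \<le> T" and t: "t \<in> {0..T}"
  shows "AE \<omega> in M. \<tau> \<omega> \<le> t \<longrightarrow>
    0 \<le> at_rv V (Y 0 (\<lambda>_. t)) \<xi> \<omega> \<and> at_rv V (Y 0 (\<lambda>_. t)) \<xi> \<omega> \<le> at_rv V (Y n (\<lambda>_. t)) \<xi> \<omega> \<and>
    at_rv V (Y n (\<lambda>_. t)) \<xi> \<omega> \<le> real_cond_exp M (F t) (\<lambda>\<omega>'. exp (LINT s:{\<tau> \<omega>'..T}|lborel. \<gamma> s \<omega>')) \<omega>"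
proof -
  have t_time: "horizon_time (\<lambda>_. t)" using t by (intro horizon_time_const) auto
  have "AE \<omega> in M. 0 \<le> Y 0 (\<lambda>_. t) (\<xi> \<omega>) \<omega> \<and> Y 0 (\<lambda>_. t) (\<xi> \<omega>) \<omega> \<le> Y n (\<lambda>_. t) (\<xi> \<omega>) \<omega> \<and>
      Y n (\<lambda>_. t) (\<xi> \<omega>) \<omega> \<le> envelope (\<lambda>_. t) \<omega>"
  proof (rule AE_at_random_index[OF V])
    show "AE \<omega> in M. 0 \<le> Y 0 (\<lambda>_. t) a \<omega> \<and> Y 0 (\<lambda>_. t) a \<omega> \<le> Y n (\<lambda>_. t) a \<omega> \<and>
        Y n (\<lambda>_. t) a \<omega> \<le> envelope (\<lambda>_. t) \<omega>" for a
      using envelopedD(2)[OF enveloped_Ysch t_time, of n a] envelopedD(2)[OF enveloped_Ysch_0 t_time, of a]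
        Ysch_0_le_Ysch[OF t_time, of a n]
      by eventually_elim simp
  qed
  moreover have "AE \<omega> in M. \<tau> \<omega> \<le> t \<longrightarrow>
      envelope (\<lambda>_. t) \<omega> \<le> real_cond_exp M (F t) (\<lambda>\<omega>. exp (pathwise_integral \<gamma> \<tau> (\<lambda>_. T) \<omega>)) \<omega>"
    using t by (intro envelope_le_cexp_from_earlier[OF \<tau>]) auto
  ultimately show ?thesis
    using AE_space
  proof eventually_elim
    case (elim \<omega>)
    then have "\<xi> \<omega> \<in> V" using V(2) by blast
    with elim show ?case by (auto simp: at_rv_eq[OF V(1)] pathwise_integral_def simp del: Ysch.simps)
  qed
qed

lemma at_rv_Ysch_eq_Osch:
  assumes V: "finite V" "\<xi> \<in> space M \<rightarrow> V"
    and late: "AE \<omega> in M. T - \<Delta> \<le> \<tau> \<omega>" and "1 \<le> n" and t: "t \<in> {0..T}"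
  shows "AE \<omega> in M. \<tau> \<omega> \<le> t \<longrightarrow>
    at_rv V (Y n (\<lambda>_. t)) \<xi> \<omega> = at_rv V (Osch M F T X \<Delta> U \<psi> g n (\<lambda>_. t)) \<xi> \<omega>"
proof (cases "T - \<Delta> \<le> t")
  case True
  then have t_time: "horizon_time (\<lambda>_. t)" and t_late: "AE \<omega> in M. T - \<Delta> \<le> t"
    using t by (auto intro: horizon_time_const)
  obtain m where n: "n = Suc m" using \<open>1 \<le> n\<close> by (cases n) auto
  have "AE \<omega> in M. Y (Suc m) (\<lambda>_. t) (\<xi> \<omega>) \<omega> = obstacle (Y m) (\<lambda>_. t) (\<xi> \<omega>) \<omega>"
    by (rule AE_at_random_index[OF V Ysch_Suc_late[OF t_time t_late]])
  with AE_space show ?thesis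
  proof eventually_elim
    case (elim \<omega>)
    then have "\<xi> \<omega> \<in> V" using V(2) by blast
    with elim show ?case by (simp add: at_rv_eq[OF V(1)] n Osch_def del: Ysch.simps)
  qed
next
  case False
  from late show ?thesis by eventually_elim (use False in linarith)
qed

end

theorem corollary2p1:
  fixes M :: "'a measure"
    and T \<Delta> :: real
    and B :: "real \<Rightarrow> 'a \<Rightarrow> real^'d"
    and F :: "real \<Rightarrow> 'a measure"
    and X :: "real \<Rightarrow> 'a \<Rightarrow> real^'l"
    and U :: "(real^'l) set"
    and \<psi> :: "real^'l \<Rightarrow> real"
    and g :: "real \<Rightarrow> 'a \<Rightarrow> real^'l \<Rightarrow> real"
    and \<gamma> :: "real \<Rightarrow> 'a \<Rightarrow> real"
    and \<tau> :: "'a \<Rightarrow> real"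
    and \<xi> :: "'a \<Rightarrow> real^'l"
  assumes "prob_space M" and "complete_measure M"
    and "0 < T"
    and "std_brownian_motion M T B"
    and F_def: "F = brownian_filtration M B T"
    and "progressive F T X"
    and "(\<integral>\<^sup>+\<omega>. (\<integral>\<^sup>+s\<in>{0..T}. ennreal ((norm (X s \<omega>))\<^sup>2) \<partial>lborel) \<partial>M) < \<infinity>"
    and "0 < \<Delta>" and "\<Delta> < T"
    and "finite U" and "U \<noteq> {}"
    and "\<And>x. 0 \<le> \<psi> x"
    and "progressive_param F T g"
    and "progressive F T \<gamma>"
    and "\<And>t \<omega>. t \<in> {0..T} \<Longrightarrow> \<omega> \<in> space M \<Longrightarrow> 0 \<le> \<gamma> t \<omega>"
    and "AE \<omega> in M. set_integrable lborel {0..T} (\<lambda>s. \<gamma> s \<omega>)"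
    and "integrable M (\<lambda>\<omega>. exp (LINT s:{0..T}|lborel. \<gamma> s \<omega>))"
    and "AE \<omega> in M. \<forall>t\<in>{0..T}. \<forall>x. \<bar>g t \<omega> x\<bar> \<le> \<gamma> t \<omega>"
    and "stopping_time F \<tau>" and "\<And>\<omega>. \<omega> \<in> space M \<Longrightarrow> 0 \<le> \<tau> \<omega> \<and> \<tau> \<omega> \<le> T"
    and "\<xi> \<in> borel_measurable (filtration.pre_sigma (space M) F \<tau>)"
    and "\<And>\<omega>. \<omega> \<in> space M \<Longrightarrow> \<xi> \<omega> \<in> Vset U T \<Delta>"
  shows
    "(\<forall>n. \<forall>t\<in>{0..T}. AE \<omega> in M. \<tau> \<omega> \<le> t \<longrightarrow>
        0 \<le> at_rv (Vset U T \<Delta>) (Ysch M F T X \<Delta> U \<psi> g 0 (\<lambda>_. t)) \<xi> \<omega> \<and>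
        at_rv (Vset U T \<Delta>) (Ysch M F T X \<Delta> U \<psi> g 0 (\<lambda>_. t)) \<xi> \<omega>
          \<le> at_rv (Vset U T \<Delta>) (Ysch M F T X \<Delta> U \<psi> g n (\<lambda>_. t)) \<xi> \<omega> \<and>
        at_rv (Vset U T \<Delta>) (Ysch M F T X \<Delta> U \<psi> g n (\<lambda>_. t)) \<xi> \<omega>
          \<le> real_cond_exp M (F t) (\<lambda>\<omega>'. exp (LINT s:{\<tau> \<omega>'..T}|lborel. \<gamma> s \<omega>')) \<omega>)
     \<and>
     ((AE \<omega> in M. T - \<Delta> \<le> \<tau> \<omega>) \<longrightarrow>
       (\<forall>n\<ge>1. \<forall>t\<in>{0..T}. AE \<omega> in M. \<tau> \<omega> \<le> t \<longrightarrow>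
          at_rv (Vset U T \<Delta>) (Ysch M F T X \<Delta> U \<psi> g n (\<lambda>_. t)) \<xi> \<omega>
          = at_rv (Vset U T \<Delta>) (Osch M F T X \<Delta> U \<psi> g n (\<lambda>_. t)) \<xi> \<omega>))"
proof -
  have "complete_filtration M F"
    unfolding F_def using assms(1,2,4) by (rule complete_filtration_brownian_filtration)
  then interpret switching_scheme M F T \<gamma> X \<Delta> U \<psi> g
    using assms(3,6,8,10-18)
    by (intro switching_scheme.intro dominating_rate.intro dominating_rate_axioms.intro
        switching_scheme_axioms.intro) simp_all
  \<comment> \<open>The bounds hold simultaneously for the finitely many possible values of xi, so the
    F_tau-measurability of xi is not needed; neither are the square integrability of X and Delta < T.\<close>
  have V: "finite (Vset U T \<Delta>)" "\<xi> \<in> space M \<rightarrow> Vset U T \<Delta>"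
    using assms(22) finite_Vset[OF assms(10)] by auto
  have \<tau>: "\<forall>\<omega>\<in>space M. 0 \<le> \<tau> \<omega> \<and> \<tau> \<omega> \<le> T" using assms(20) by blast
  show ?thesis
    using at_rv_Ysch_bounds[OF V assms(19) \<tau>] at_rv_Ysch_eq_Osch[OF V] by blast
qed
end
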